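(* Every real member of the pencil $|D_{\rm L}|$, $D_{\rm L}=r_1+\dots+r_n$, contains exactly one point $q$ of the central circle $\Sigma^\sigma_n$, and $q$ is not a multiple point of that member.
   Context: Fix $n\ge2$, reals $a_1<\dots<a_{2n}$, $f(z)=\prod(z-a_i)$. $\Sigma$ is the hyperelliptic curve $v^2=f(z)$ in the total space of $\mathscr O_{\mathbb{P}^1}(n)$ (equivalently, in the cone over a rational normal curve $\Lambda\subset\mathbb{P}^n$ of degree $n$), of genus $n-1$, with double covering $\pi:\Sigma\to\mathbb{P}^1$, $(v,z)\mapsto z$, ramification points $r_i$ over $a_i$, and real structure $\sigma(v,z)=((-1)^n\bar v,\bar z)$. $|D_{\rm L}|$ is a pencil (with $D_{\rm L}\sim r_{n+1}+\dots+r_{2n}$), and it carries the real structure induced by $\sigma$; real members are $\sigma$-invariant members. The central circle is $\Sigma^\sigma_n:=\pi^{-1}([a_n,a_{n+1}])$, which is pointwise fixed by $\sigma$. *)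

theory Defs
  imports "HOL-Complex_Analysis.Complex_Analysis" "HOL-Computational_Algebra.Polynomial"
begin

text \<open>Points of the compact hyperelliptic curve Sigma: v^2 = f(z) in the total space of O(n).
  Aff v z is the point with fibre coordinate v over z in the affine chart; Inf u is the point
  over z = infinity with fibre coordinate u = v w^n, w = 1/z (so u = 1 or u = -1).\<close>
datatype spt = Aff complex complex | Inf complex

definition hf :: "nat \<Rightarrow> (nat \<Rightarrow> real) \<Rightarrow> complex \<Rightarrow> complex" where
  "hf n a z = (\<Prod>i=1..2*n. z - complex_of_real (a i))"

definition Sigma_pts :: "nat \<Rightarrow> (nat \<Rightarrow> real) \<Rightarrow> spt set" where
  "Sigma_pts n a = {Aff v z | v z. v ^ 2 = hf n a z} \<union> {Inf 1, Inf (-1)}"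

text \<open>Explicit local uniformizing parameter t at each point, returning the affine
  coordinates (v,z) of the point with parameter t (for t near 0, t \<noteq> 0 at infinity).\<close>
fun chart :: "nat \<Rightarrow> (nat \<Rightarrow> real) \<Rightarrow> spt \<Rightarrow> complex \<Rightarrow> complex \<times> complex" where
  "chart n a (Aff v0 z0) =
     (if v0 \<noteq> 0 then (\<lambda>t. (v0 * csqrt (hf n a (z0 + t) / v0 ^ 2), z0 + t))
      else (\<lambda>t. let J = {j \<in> {1..2*n}. complex_of_real (a j) \<noteq> z0};
                    c = (\<Prod>j\<in>J. z0 - complex_of_real (a j));
                    hh = (\<Prod>j\<in>J. z0 + t ^ 2 - complex_of_real (a j))
                in (t * csqrt c * csqrt (hh / c), z0 + t ^ 2)))"
| "chart n a (Inf u0) =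
     (\<lambda>t. (u0 * csqrt (\<Prod>j=1..2*n. 1 - complex_of_real (a j) * t) / t ^ n, 1 / t))"

text \<open>Rational functions on Sigma: every element of C(z)[v]/(v^2 - f) is (P0(z) + P1(z) v)/Q(z).\<close>
type_synonym rfun = "complex poly \<times> complex poly \<times> complex poly"

fun rf_eval :: "rfun \<Rightarrow> complex \<times> complex \<Rightarrow> complex" where
  "rf_eval (P0, P1, Q) (v, z) = (poly P0 z + poly P1 z * v) / poly Q z"

fun rf_nonzero :: "rfun \<Rightarrow> bool" where
  "rf_nonzero (P0, P1, Q) \<longleftrightarrow> Q \<noteq> 0 \<and> (P0 \<noteq> 0 \<or> P1 \<noteq> 0)"

definition ord_at :: "nat \<Rightarrow> (nat \<Rightarrow> real) \<Rightarrow> rfun \<Rightarrow> spt \<Rightarrow> int" where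
  "ord_at n a \<phi> p = zorder (\<lambda>t. rf_eval \<phi> (chart n a p t)) 0"

definition div_of :: "nat \<Rightarrow> (nat \<Rightarrow> real) \<Rightarrow> rfun \<Rightarrow> spt \<Rightarrow> int" where
  "div_of n a \<phi> p = (if p \<in> Sigma_pts n a then ord_at n a \<phi> p else 0)"

definition ram_pt :: "(nat \<Rightarrow> real) \<Rightarrow> nat \<Rightarrow> spt" where
  "ram_pt a i = Aff 0 (complex_of_real (a i))"

definition D_L :: "nat \<Rightarrow> (nat \<Rightarrow> real) \<Rightarrow> spt \<Rightarrow> int" where
  "D_L n a p = (if p \<in> ram_pt a ` {1..n} then 1 else 0)"

definition pencil_members :: "nat \<Rightarrow> (nat \<Rightarrow> real) \<Rightarrow> (spt \<Rightarrow> int) set" where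
  "pencil_members n a = {D. (\<forall>p. 0 \<le> D p) \<and>
      (\<exists>\<phi>. rf_nonzero \<phi> \<and> D = (\<lambda>p. D_L n a p + div_of n a \<phi> p))}"

fun sigma_pt :: "nat \<Rightarrow> spt \<Rightarrow> spt" where
  "sigma_pt n (Aff v z) = Aff ((-1) ^ n * cnj v) (cnj z)"
| "sigma_pt n (Inf u) = Inf ((-1) ^ n * cnj u)"

definition real_members :: "nat \<Rightarrow> (nat \<Rightarrow> real) \<Rightarrow> (spt \<Rightarrow> int) set" where
  "real_members n a = {D \<in> pencil_members n a. \<forall>p. D (sigma_pt n p) = D p}"

definition central_circle :: "nat \<Rightarrow> (nat \<Rightarrow> real) \<Rightarrow> spt set" where
  "central_circle n a = {p \<in> Sigma_pts n a. \<exists>v z. p = Aff v z \<and> z \<in> \<real> \<and>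
      a n \<le> Re z \<and> Re z \<le> a (n + 1)}"

end

theory Submission
  imports Defs "HOL-Computational_Algebra.Fundamental_Theorem_Algebra"
begin

text \<open>
  Write \<open>g = (z - a\<^sub>1) \<cdots> (z - a\<^sub>n)\<close> and \<open>h = (a\<^sub>n\<^sub>+\<^sub>1 - z) \<cdots> (a\<^sub>2\<^sub>n - z)\<close>, so
  that \<open>f = (-1)\<^sup>n g h\<close>. If \<open>D\<^sub>L + div \<phi> \<ge> 0\<close>, the bounds at the two points over each \<open>z\<close>
  bound the trace and the norm of \<phi>, which are rational functions of \<open>z\<close>; this forces
  \<open>\<phi> = \<lambda> + \<mu> v / g\<close>. The norm of this function is \<open>(\<lambda>\<^sup>2 g - (-1)\<^sup>n \<mu>\<^sup>2 h) / g\<close>.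
  If \<open>\<mu> = 0\<close> the member is \<open>D\<^sub>L\<close>, which meets the central circle only at \<open>r\<^sub>n\<close>; if \<open>\<lambda> = 0\<close>
  it meets it only at \<open>r\<^sub>n\<^sub>+\<^sub>1\<close>. Otherwise the pole of \<open>v / g\<close> cancels \<open>D\<^sub>L\<close> at \<open>r\<^sub>n\<close>, and
  the remaining points of the circle in the member lie over zeros of the norm. Invariance
  under \<sigma>, applied at a zero of the norm off the branch points (it exists since \<open>n \<ge> 2\<close>),
  makes \<open>(-1)\<^sup>n (\<lambda> / \<mu>)\<^sup>2\<close> a positive number \<open>c\<close>. Then the norm is a multiple of
  \<open>c g - h\<close>, which increases strictly from negative to positive on \<open>[a\<^sub>n, a\<^sub>n\<^sub>+\<^sub>1]\<close>, so it
  has exactly one zero there, and that zero is simple.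
\<close>

section \<open>Polynomials and local orders\<close>

lemma dvd_if_order_le:
  fixes P Q :: "complex poly"
  assumes "Q \<noteq> 0" and "\<And>z. order z Q \<le> order z P"
  shows "Q dvd P"
proof (cases "P = 0")
  case False
  have "proots Q \<subseteq># proots P"
    using assms False by (simp add: subseteq_mset_def)
  then have "(\<Prod>x\<in>#proots Q. [:-x, 1:]) dvd (\<Prod>x\<in>#proots P. [:-x, 1:])"
    by (intro prod_mset_subset_imp_dvd image_mset_subseteq_mono)
  then have "smult (lead_coeff Q) (\<Prod>x\<in>#proots Q. [:-x, 1:]) dvd
             smult (lead_coeff P) (\<Prod>x\<in>#proots P. [:-x, 1:])"
    using assms(1) False by (simp add: smult_dvd_iff dvd_smult_iff)
  then show ?thesis
    by (simp only: complex_poly_decompose_multiset)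
qed simp

lemma smult_if_dvd_degree_le:
  fixes P Q :: "'a::field poly"
  assumes "Q dvd P" and "degree P \<le> degree Q" and "Q \<noteq> 0"
  obtains c where "P = smult c Q"
proof -
  obtain B where B: "P = Q * B"
    using assms(1) by (elim dvdE)
  show ?thesis
  proof (cases "B = 0")
    case False
    then have "degree B = 0"
      using assms(2,3) B by (simp add: degree_mult_eq)
    then obtain c where "B = [:c:]"
      by (elim degree_eq_zeroE)
    then show ?thesis
      using B that[of c] by simp
  qed (use B that[of 0] in simp)
qed

lemma eventually_poly_nonzero_at:
  fixes R :: "complex poly"
  assumes "R \<noteq> 0"
  shows "\<forall>\<^sub>F w in at z. poly R w \<noteq> 0"
  using islimpt_finite[OF poly_roots_finite[OF assms], of z] by (simp add: islimpt_iff_eventually)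

lemma eventually_poly_nonzero_at_infinity:
  fixes R :: "complex poly"
  assumes "R \<noteq> 0"
  shows "\<forall>\<^sub>F w in at_infinity. poly R w \<noteq> 0"
proof -
  obtain B where "\<forall>w\<in>{w. poly R w = 0}. norm w \<le> B"
    using finite_imp_bounded[OF poly_roots_finite[OF assms]] by (auto simp: bounded_iff)
  then show ?thesis
    unfolding eventually_at_infinity by (intro exI[of _ "B + 1"]) force
qed

lemma order_le_of_bounded_ratio:
  fixes P Q :: "complex poly"
  assumes P: "P \<noteq> 0" and Q: "Q \<noteq> 0"
    and bounded: "\<forall>\<^sub>F z in at z0. norm (poly P z / poly Q z) * norm (z - z0) ^ m \<le> C"
  shows "order z0 Q \<le> order z0 P + m"
proof (rule ccontr)
  assume "\<not> order z0 Q \<le> order z0 P + m"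
  then obtain d where d: "d \<ge> 1" and oQ: "order z0 Q = order z0 P + m + d"
    by (intro that[of "order z0 Q - order z0 P - m"]) auto
  obtain P' where P': "P = [:-z0, 1:] ^ order z0 P * P'" "\<not> [:-z0, 1:] dvd P'"
    using order_decomp[OF P] by blast
  obtain Q' where Q': "Q = [:-z0, 1:] ^ order z0 Q * Q'" "\<not> [:-z0, 1:] dvd Q'"
    using order_decomp[OF Q] by blast
  have P'0: "poly P' z0 \<noteq> 0" and Q'0: "poly Q' z0 \<noteq> 0"
    using P'(2) Q'(2) by (simp_all add: poly_eq_0_iff_dvd)
  define k where "k z = norm (poly P' z / poly Q' z)" for z
  have "\<forall>\<^sub>F z in at z0. k z \<le> C * norm (z - z0) ^ d"
    using bounded eventually_at_ball'[of 1 z0 UNIV, OF zero_less_one]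
  proof eventually_elim
    case (elim z)
    then have nz: "norm (z - z0) > 0" by auto
    have "poly P z / poly Q z = poly P' z / ((z - z0) ^ (m + d) * poly Q' z)"
      using nz by (subst P'(1), subst Q'(1)) (simp add: oQ poly_power power_add field_simps)
    then have "norm (poly P z / poly Q z) * norm (z - z0) ^ m = k z / norm (z - z0) ^ d"
      using nz by (simp add: k_def norm_divide norm_mult norm_power power_add field_simps)
    then show ?case
      using elim(1) nz by (simp add: divide_le_eq mult.commute)
  qed
  moreover have "(k \<longlongrightarrow> k z0) (at z0)"
    unfolding k_def using Q'0 by (intro tendsto_intros) auto
  moreover have "((\<lambda>z. C * norm (z - z0) ^ d) \<longlongrightarrow> 0) (at z0)"
    using d tendsto_intros(2)[of C] by (auto intro!: tendsto_eq_intros simp: zero_power)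
  ultimately have "k z0 \<le> 0"
    by (intro tendsto_le[of "at z0"]) auto
  with P'0 Q'0 show False
    by (simp add: k_def)
qed

lemma degree_le_of_bounded_ratio_at_infinity:
  fixes P Q :: "complex poly"
  assumes P: "P \<noteq> 0" and Q: "Q \<noteq> 0"
    and bounded: "\<forall>\<^sub>F t in at 0. norm (poly P (1/t) / poly Q (1/t)) \<le> C"
  shows "degree P \<le> degree Q"
proof -
  define P2 where "P2 = monom 1 (degree Q) * reflect_poly P"
  define Q2 where "Q2 = monom 1 (degree P) * reflect_poly Q"
  have rP: "poly (reflect_poly P) 0 \<noteq> 0" and rQ: "poly (reflect_poly Q) 0 \<noteq> 0"
    using P Q by (simp_all add: poly_0_coeff_0)
  then have P2: "P2 \<noteq> 0" and Q2: "Q2 \<noteq> 0"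
    by (auto simp: P2_def Q2_def)
  have "\<forall>\<^sub>F t in at 0. norm (poly P2 t / poly Q2 t) * norm (t - 0) ^ 0 \<le> C"
    using bounded eventually_at_ball'[of 1 0 UNIV, OF zero_less_one]
  proof eventually_elim
    case (elim t)
    then have t: "t \<noteq> 0" by auto
    have "poly P (1/t) / poly Q (1/t) =
      (poly (reflect_poly P) t / t ^ degree P) / (poly (reflect_poly Q) t / t ^ degree Q)"
      using poly_reflect_poly_nz[OF t, of P] poly_reflect_poly_nz[OF t, of Q] t
      by (simp add: field_simps inverse_eq_divide)
    also have "\<dots> = (t ^ degree Q * poly (reflect_poly P) t) / (t ^ degree P * poly (reflect_poly Q) t)"
      using t by (simp add: divide_divide_times_eq mult.commute)
    also have "\<dots> = poly P2 t / poly Q2 t"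
      by (simp add: P2_def Q2_def poly_monom)
    finally show ?case
      using elim by simp
  qed
  from order_le_of_bounded_ratio[OF P2 Q2 this] have "order 0 Q2 \<le> order 0 P2"
    by simp
  moreover have "order 0 (monom 1 d * r) = d" if "poly r 0 \<noteq> 0" for d and r :: "complex poly"
    using that by (subst order_mult) (auto simp: order_0I)
  ultimately show ?thesis
    using rP rQ by (simp add: P2_def Q2_def)
qed

lemma eventually_at_of_square_param:
  fixes z0 :: complex
  assumes "\<forall>\<^sub>F t in at 0. Phi (z0 + t\<^sup>2) (norm t ^ 2)"
  shows "\<forall>\<^sub>F z in at z0. Phi z (norm (z - z0))"
proof -
  obtain r where r: "r > 0" "\<forall>t. t \<noteq> 0 \<and> dist t 0 < r \<longrightarrow> Phi (z0 + t\<^sup>2) (norm t ^ 2)"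
    using assms unfolding eventually_at by blast
  show ?thesis unfolding eventually_at
  proof (intro exI[of _ "r\<^sup>2"] conjI ballI impI)
    show "r\<^sup>2 > 0" using r by simp
    fix z assume "z \<in> UNIV" and z: "z \<noteq> z0 \<and> dist z z0 < r\<^sup>2"
    define t where "t = csqrt (z - z0)"
    have t2: "t\<^sup>2 = z - z0" by (simp add: t_def)
    have nt: "norm t ^ 2 = norm (z - z0)" by (metis norm_power t2)
    have "t \<noteq> 0" using z t2 by auto
    moreover have "norm t < r"
    proof -
      have "norm t ^ 2 < r\<^sup>2" using z nt by (simp add: dist_norm)
      then show ?thesis using r(1) by (simp add: power_less_imp_less_base)
    qed
    ultimately have "Phi (z0 + t\<^sup>2) (norm t ^ 2)" using r(2) by simp
    then show "Phi z (norm (z - z0))" using t2 nt by simp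
  qed
qed

lemma zorder_eqI_eventually:
  assumes "h analytic_on {z}" "h z \<noteq> 0"
    and "\<forall>\<^sub>F w in at z. f w = h w * (w - z) powi n"
  shows "zorder f z = n"
proof -
  obtain r where r: "r > 0" "h holomorphic_on ball z r"
    using assms(1) analytic_on_def by auto
  have "zorder (\<lambda>w. h w * (w - z) powi n) z = n"
    by (rule zorder_eqI[OF open_ball _ r(2) assms(2)]) (use r in auto)
  with zorder_cong[OF assms(3) refl] show ?thesis
    by simp
qed

lemma eventually_bounded_of_zorder_ge:
  fixes F :: "complex \<Rightarrow> complex"
  assumes mero: "F meromorphic_on {0}" and fr: "\<exists>\<^sub>F t in at 0. F t \<noteq> 0"
    and zo: "zorder F 0 \<ge> - int m"
  shows "\<exists>C. \<forall>\<^sub>F t in at 0. norm (F t) * norm t ^ m \<le> C"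
proof -
  have iso: "isolated_singularity_at F 0" and ness: "not_essential F 0"
    using mero by (simp_all add: meromorphic_at_iff)
  obtain r where r: "r > 0" "zor_poly F 0 holomorphic_on cball 0 r"
     "\<forall>w\<in>cball 0 r - {0}. F w = zor_poly F 0 w * (w - 0) powi zorder F 0"
    using zorder_exist[OF iso ness fr] by blast
  define r' where "r' = min r 1"
  have "continuous_on (cball 0 r') (zor_poly F 0)"
    using r(2) by (rule holomorphic_on_imp_continuous_on[OF holomorphic_on_subset]) (auto simp: r'_def)
  then have "compact ((zor_poly F 0) ` cball 0 r')"
    by (rule compact_continuous_image) simp
  then obtain M where M: "\<forall>w\<in>cball 0 r'. norm (zor_poly F 0 w) \<le> M"
    using compact_imp_bounded bounded_iff by (metis imageI)
  have "eventually (\<lambda>t. norm (F t) * norm t ^ m \<le> M) (at 0)"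
    unfolding eventually_at
  proof (intro exI[of _ r'] conjI ballI impI)
    show "r' > 0" using r by (simp add: r'_def)
    fix t :: complex assume "t \<in> UNIV" and t: "t \<noteq> 0 \<and> dist t 0 < r'"
    then have tc: "t \<in> cball 0 r' - {0}" "t \<in> cball 0 r - {0}" by (auto simp: r'_def)
    have nt: "norm t \<le> 1" "norm t > 0" using t by (auto simp: r'_def)
    define k where "k = zorder F 0"
    have km: "k + int m \<ge> 0" using zo by (simp add: k_def)
    have "norm (F t) * norm t ^ m = norm (zor_poly F 0 t) * (norm t powi k * norm t ^ m)"
      using r(3) tc(2) by (simp add: k_def norm_mult norm_power_int)
    also have "norm t powi k * norm t ^ m = norm t ^ nat (k + int m)"
    proof -
      have "norm t powi k * norm t ^ m = norm t powi k * norm t powi (int m)"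
        by (simp add: power_int_of_nat)
      also have "\<dots> = norm t powi (k + int m)"
        using nt by (simp add: power_int_add)
      also have "\<dots> = norm t ^ nat (k + int m)"
        using km by (metis int_nat_eq power_int_of_nat)
      finally show ?thesis .
    qed
    also have "norm t ^ nat (k + int m) \<le> 1" using nt by (simp add: power_le_one)
    finally have "norm (F t) * norm t ^ m \<le> norm (zor_poly F 0 t) * 1"
      by (smt (verit, best) mult_left_mono norm_ge_zero)
    moreover have "norm (zor_poly F 0 t) \<le> M" using M tc(1) by blast
    ultimately show "norm (F t) * norm t ^ m \<le> M" by linarith
  qed
  then show ?thesis by blast
qed

lemma analytic_on_poly [analytic_intros]:
  assumes "g analytic_on A"
  shows "(\<lambda>t. poly P (g t)) analytic_on A"
proof (induction P)
  case (pCons c p)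
  have "(\<lambda>t. c + g t * poly p (g t)) analytic_on A"
    using pCons assms by (intro analytic_intros)
  then show ?case by simp
qed simp

lemma meromorphic_on_poly [meromorphic_intros]:
  assumes "g meromorphic_on A"
  shows "(\<lambda>t. poly P (g t)) meromorphic_on A"
proof (induction P)
  case (pCons c p)
  have "(\<lambda>t. c + g t * poly p (g t)) meromorphic_on A"
    using pCons assms by (intro meromorphic_intros)
  then show ?case by simp
qed (simp add: meromorphic_on_const)

section \<open>The curve, its charts and the pencil\<close>

definition root_poly :: "(nat \<Rightarrow> real) \<Rightarrow> nat set \<Rightarrow> complex poly" where
  "root_poly a I = (\<Prod>i\<in>I. [:- complex_of_real (a i), 1:])"

definition f_poly :: "nat \<Rightarrow> (nat \<Rightarrow> real) \<Rightarrow> complex poly" where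
  "f_poly n a = root_poly a {1..2*n}"

definition g_poly :: "nat \<Rightarrow> (nat \<Rightarrow> real) \<Rightarrow> complex poly" where
  "g_poly n a = root_poly a {1..n}"

definition h_poly :: "nat \<Rightarrow> (nat \<Rightarrow> real) \<Rightarrow> complex poly" where
  "h_poly n a = (\<Prod>i\<in>{n+1..2*n}. [:complex_of_real (a i), -1:])"

lemma poly_root_poly [simp]: "poly (root_poly a I) z = (\<Prod>i\<in>I. z - complex_of_real (a i))"
  by (simp add: root_poly_def poly_prod)

lemma root_poly_nonzero [simp]: "root_poly a I \<noteq> 0"
  by (cases "finite I") (auto simp: root_poly_def)

lemma degree_root_poly: "degree (root_poly a I) = card I"
  by (cases "finite I") (simp_all add: root_poly_def degree_prod_eq_sum_degree)

lemma poly_f_poly [simp]: "poly (f_poly n a) z = hf n a z"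
  by (simp add: f_poly_def hf_def)

lemma poly_h_poly: "poly (h_poly n a) z = (\<Prod>i\<in>{n+1..2*n}. complex_of_real (a i) - z)"
  by (simp add: h_poly_def poly_prod)

lemma f_poly_nonzero [simp]: "f_poly n a \<noteq> 0"
  and g_poly_nonzero [simp]: "g_poly n a \<noteq> 0"
  by (simp_all add: f_poly_def g_poly_def)

lemma degree_f_poly: "degree (f_poly n a) = 2 * n"
  and degree_g_poly: "degree (g_poly n a) = n"
  by (simp_all add: f_poly_def g_poly_def degree_root_poly)

lemma hf_eq_g_h: "hf n a z = (-1) ^ n * poly (g_poly n a) z * poly (h_poly n a) z"
proof -
  have "(\<Prod>i\<in>{n+1..2*n}. z - complex_of_real (a i)) =
        (\<Prod>i\<in>{n+1..2*n}. - (complex_of_real (a i) - z))"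
    by simp
  also have "\<dots> = (-1) ^ n * poly (h_poly n a) z"
    by (subst prod_uminus) (simp add: poly_h_poly)
  finally have "(\<Prod>i\<in>{n+1..2*n}. z - complex_of_real (a i)) = (-1) ^ n * poly (h_poly n a) z" .
  moreover have "{1..2*n} = {1..n} \<union> {n+1..2*n}" "{1..n} \<inter> {n+1..2*n} = {}"
    by auto
  ultimately show ?thesis
    unfolding hf_def g_poly_def by (simp add: prod.union_disjoint)
qed

lemma hf_eq_0_iff: "hf n a z = 0 \<longleftrightarrow> (\<exists>i\<in>{1..2*n}. z = complex_of_real (a i))"
  by (simp add: hf_def)

lemma cnj_hf: "cnj (hf n a z) = hf n a (cnj z)"
  by (simp add: hf_def)

lemma cnj_poly_g_poly: "cnj (poly (g_poly n a) z) = poly (g_poly n a) (cnj z)"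
  by (simp add: g_poly_def)

definition other_factors :: "nat \<Rightarrow> (nat \<Rightarrow> real) \<Rightarrow> complex \<Rightarrow> complex \<Rightarrow> complex" where
  "other_factors n a z w = (\<Prod>j\<in>{j\<in>{1..2*n}. complex_of_real (a j) \<noteq> z}. w - complex_of_real (a j))"

definition branch_unit :: "nat \<Rightarrow> (nat \<Rightarrow> real) \<Rightarrow> complex \<Rightarrow> complex \<Rightarrow> complex" where
  "branch_unit n a z t =
     csqrt (other_factors n a z z) * csqrt (other_factors n a z (z + t\<^sup>2) / other_factors n a z z)"

definition sqrt_branch :: "nat \<Rightarrow> (nat \<Rightarrow> real) \<Rightarrow> complex \<Rightarrow> complex \<Rightarrow> complex \<Rightarrow> complex" where
  "sqrt_branch n a v z t = v * csqrt (hf n a (z + t) / v\<^sup>2)"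

definition infinity_branch :: "nat \<Rightarrow> (nat \<Rightarrow> real) \<Rightarrow> complex \<Rightarrow> complex" where
  "infinity_branch n a t = csqrt (\<Prod>j=1..2*n. 1 - complex_of_real (a j) * t) / t ^ n"

lemma chart_regular: "v \<noteq> 0 \<Longrightarrow> chart n a (Aff v z) t = (sqrt_branch n a v z t, z + t)"
  by (simp add: sqrt_branch_def)

lemma chart_branch: "chart n a (Aff 0 z) t = (t * branch_unit n a z t, z + t\<^sup>2)"
  by (simp add: branch_unit_def other_factors_def Let_def)

lemma chart_infinity: "chart n a (Inf u) t = (u * infinity_branch n a t, 1 / t)"
  by (simp add: infinity_branch_def)

declare chart.simps [simp del]

lemma other_factors_nonzero: "other_factors n a z z \<noteq> 0"
  unfolding other_factors_def by (subst prod_zero_iff) auto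

lemma branch_unit_analytic [analytic_intros]: "branch_unit n a z analytic_on {0}"
proof -
  have "(\<lambda>t. other_factors n a z (z + t\<^sup>2)) analytic_on {0}"
    unfolding other_factors_def by (intro analytic_intros)
  then have "(\<lambda>t. other_factors n a z (z + t\<^sup>2) / other_factors n a z z) analytic_on {0}"
    using other_factors_nonzero by (intro analytic_intros)
  moreover have "other_factors n a z (z + 0\<^sup>2) / other_factors n a z z \<notin> \<real>\<^sub>\<le>\<^sub>0"
    using other_factors_nonzero by simp
  ultimately have "(\<lambda>t. csqrt (other_factors n a z (z + t\<^sup>2) / other_factors n a z z)) analytic_on {0}"
    by (metis analytic_on_csqrt' singletonD)
  then show ?thesis
    unfolding branch_unit_def by (rule analytic_on_mult[OF analytic_on_const])
qed

lemma branch_unit_0: "branch_unit n a z 0 \<noteq> 0"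
  using other_factors_nonzero by (simp add: branch_unit_def)

lemma branch_unit_even: "branch_unit n a z (- t) = branch_unit n a z t"
  by (simp add: branch_unit_def)

lemma sqrt_branch_analytic [analytic_intros]:
  assumes "v \<noteq> 0" "v\<^sup>2 = hf n a z"
  shows "sqrt_branch n a v z analytic_on {0}"
proof -
  have "(\<lambda>t. hf n a (z + t) / v\<^sup>2) analytic_on {0}"
    unfolding hf_def using assms by (intro analytic_intros) auto
  moreover have "hf n a (z + 0) / v\<^sup>2 \<notin> \<real>\<^sub>\<le>\<^sub>0"
    using assms by (simp add: assms(2)[symmetric])
  ultimately have "(\<lambda>t. csqrt (hf n a (z + t) / v\<^sup>2)) analytic_on {0}"
    by (metis analytic_on_csqrt' singletonD)
  then show ?thesis
    unfolding sqrt_branch_def by (rule analytic_on_mult[OF analytic_on_const])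
qed

lemma sqrt_branch_0: "v \<noteq> 0 \<Longrightarrow> v\<^sup>2 = hf n a z \<Longrightarrow> sqrt_branch n a v z 0 = v"
  unfolding sqrt_branch_def by (metis add_0_right csqrt_1 divide_self_if mult.right_neutral power_not_zero)

lemma sqrt_branch_square: "v \<noteq> 0 \<Longrightarrow> (sqrt_branch n a v z t)\<^sup>2 = hf n a (z + t)"
  by (simp add: sqrt_branch_def power_mult_distrib)

lemma sqrt_branch_uminus: "sqrt_branch n a (- v) z t = - sqrt_branch n a v z t"
  by (simp add: sqrt_branch_def)

lemma infinity_branch_square:
  assumes "t \<noteq> 0"
  shows "(infinity_branch n a t)\<^sup>2 = hf n a (1 / t)"
proof -
  have "hf n a (1 / t) = (\<Prod>j=1..2*n. (1 - complex_of_real (a j) * t) / t)"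
    unfolding hf_def using assms by (intro prod.cong) (auto simp: field_simps)
  also have "\<dots> = (\<Prod>j=1..2*n. 1 - complex_of_real (a j) * t) / t ^ (2 * n)"
    by (simp add: prod_dividef)
  finally show ?thesis
    by (simp add: infinity_branch_def power_divide power_mult[symmetric] mult.commute)
qed

lemma infinity_branch_meromorphic [meromorphic_intros]: "infinity_branch n a meromorphic_on {0}"
proof -
  have "(\<lambda>t. csqrt (\<Prod>j=1..2*n. 1 - complex_of_real (a j) * t)) analytic_on {0}"
    by (rule analytic_on_csqrt') (auto intro!: analytic_intros)
  then show ?thesis
    unfolding infinity_branch_def
    by (intro meromorphic_intros analytic_on_imp_meromorphic_on) (auto intro!: analytic_intros)
qed

lemma sigma_pt_in_Sigma_pts:
  assumes "p \<in> Sigma_pts n a"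
  shows "sigma_pt n p \<in> Sigma_pts n a"
proof -
  have "((-1) ^ n * cnj v)\<^sup>2 = hf n a (cnj z)" if "v\<^sup>2 = hf n a z" for v z
    using that by (simp add: power_mult_distrib flip: cnj_hf complex_cnj_power) (simp add: power_even_eq mult.commute flip: power_mult)
  moreover have "(-1 :: complex) ^ n = 1 \<or> (-1 :: complex) ^ n = -1"
    by (simp add: minus_one_power_iff)
  ultimately show ?thesis
    using assms by (auto simp: Sigma_pts_def)
qed

lemma rf_eval_pair: "rf_eval (P0, P1, Q) x = (poly P0 (snd x) + poly P1 (snd x) * fst x) / poly Q (snd x)"
  by (cases x) simp

lemma rf_eval_add_conjugate:
  "rf_eval (P0, P1, Q) (v, z) + rf_eval (P0, P1, Q) (- v, z) = 2 * (poly P0 z / poly Q z)"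
  by (simp add: add_divide_distrib[symmetric])

lemma rf_eval_diff_conjugate_square:
  assumes "v\<^sup>2 = hf n a z"
  shows "(rf_eval (P0, P1, Q) (v, z) - rf_eval (P0, P1, Q) (- v, z))\<^sup>2 =
           4 * (poly (P1 * P1 * f_poly n a) z / poly (Q * Q) z)"
proof -
  have "rf_eval (P0, P1, Q) (v, z) - rf_eval (P0, P1, Q) (- v, z) = 2 * poly P1 z * v / poly Q z"
    by (simp add: diff_divide_distrib[symmetric])
  then show ?thesis
    using assms by (simp add: power_divide power_mult_distrib power2_eq_square)
qed

lemma eventually_bounded_trace_norm:
  fixes V Z :: "complex \<Rightarrow> complex"
  assumes "\<forall>\<^sub>F t in at 0. norm (rf_eval (P0, P1, Q) (V t, Z t)) * norm t ^ m \<le> C1"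
    and "\<forall>\<^sub>F t in at 0. norm (rf_eval (P0, P1, Q) (- V t, Z t)) * norm t ^ m \<le> C2"
    and "\<forall>\<^sub>F t in at 0. (V t)\<^sup>2 = hf n a (Z t)"
  shows "\<forall>\<^sub>F t in at 0. norm (poly P0 (Z t) / poly Q (Z t)) * norm t ^ m \<le> (C1 + C2) / 2 \<and>
           norm (poly (P1 * P1 * f_poly n a) (Z t) / poly (Q * Q) (Z t)) * norm t ^ (2 * m) \<le> ((C1 + C2) / 2)\<^sup>2"
  using assms
proof eventually_elim
  case (elim t)
  define F G where "F = rf_eval (P0, P1, Q) (V t, Z t)" and "G = rf_eval (P0, P1, Q) (- V t, Z t)"
  define T where "T = norm t ^ m"
  have T: "T \<ge> 0" and FG: "norm F * T \<le> C1" "norm G * T \<le> C2"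
    using elim(1,2) by (simp_all add: F_def G_def T_def)
  have sum: "norm (F + G) * T \<le> C1 + C2" and diff: "norm (F - G) * T \<le> C1 + C2"
    using FG T norm_triangle_ineq[of F G] norm_triangle_ineq4[of F G]
    by (smt (verit) distrib_right mult_right_mono)+
  have "F + G = 2 * (poly P0 (Z t) / poly Q (Z t))"
    unfolding F_def G_def by (rule rf_eval_add_conjugate)
  then have "norm (F + G) * T = 2 * (norm (poly P0 (Z t) / poly Q (Z t)) * T)"
    by (simp add: norm_divide norm_mult)
  with sum have trace: "norm (poly P0 (Z t) / poly Q (Z t)) * T \<le> (C1 + C2) / 2"
    by simp
  define X where "X = poly (P1 * P1 * f_poly n a) (Z t) / poly (Q * Q) (Z t)"
  have "(F - G)\<^sup>2 = 4 * X"
    unfolding F_def G_def X_def by (rule rf_eval_diff_conjugate_square[OF elim(3)])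
  then have "norm X * norm t ^ (2 * m) = (norm (F - G) * T / 2)\<^sup>2"
    by (simp add: T_def power_mult_distrib power_divide power_mult mult.commute flip: norm_power)
  also have "\<dots> \<le> ((C1 + C2) / 2)\<^sup>2"
    using diff T by (intro power_mono) auto
  finally show ?case
    using trace by (simp add: T_def X_def)
qed

definition pencil_fun :: "nat \<Rightarrow> (nat \<Rightarrow> real) \<Rightarrow> complex \<Rightarrow> complex \<Rightarrow> spt \<Rightarrow> complex \<Rightarrow> complex" where
  "pencil_fun n a l m p t = l + m * fst (chart n a p t) / poly (g_poly n a) (snd (chart n a p t))"

definition pencil_div :: "nat \<Rightarrow> (nat \<Rightarrow> real) \<Rightarrow> complex \<Rightarrow> complex \<Rightarrow> spt \<Rightarrow> int" where
  "pencil_div n a l m p = D_L n a p + zorder (pencil_fun n a l m p) 0"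

lemma pencil_fun_regular:
  "v \<noteq> 0 \<Longrightarrow> pencil_fun n a l m (Aff v z) t = l + m * sqrt_branch n a v z t / poly (g_poly n a) (z + t)"
  by (simp add: pencil_fun_def chart_regular)

lemma pencil_fun_branch:
  "pencil_fun n a l m (ram_pt a i) t =
     l + m * (t * branch_unit n a (complex_of_real (a i)) t) / poly (g_poly n a) (complex_of_real (a i) + t\<^sup>2)"
  by (simp add: pencil_fun_def ram_pt_def chart_branch)

lemma pencil_fun_regular_analytic:
  assumes "v \<noteq> 0" "v\<^sup>2 = hf n a z" and "poly (g_poly n a) z \<noteq> 0"
  shows "pencil_fun n a l m (Aff v z) analytic_on {0}"
    and "pencil_fun n a l m (Aff v z) 0 = l + m * v / poly (g_poly n a) z"
proof -
  have "(\<lambda>t. l + m * sqrt_branch n a v z t / poly (g_poly n a) (z + t)) analytic_on {0}"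
    using assms by (intro analytic_intros) auto
  then show "pencil_fun n a l m (Aff v z) analytic_on {0}"
    using pencil_fun_regular[OF assms(1)] by presburger
  show "pencil_fun n a l m (Aff v z) 0 = l + m * v / poly (g_poly n a) z"
    using assms by (simp add: pencil_fun_regular sqrt_branch_0)
qed

definition pencil_norm_poly :: "nat \<Rightarrow> (nat \<Rightarrow> real) \<Rightarrow> complex \<Rightarrow> complex \<Rightarrow> complex poly" where
  "pencil_norm_poly n a l m = smult (l\<^sup>2) (g_poly n a) - smult ((-1) ^ n * m\<^sup>2) (h_poly n a)"

lemma pencil_norm_poly_eq:
  assumes "v\<^sup>2 = hf n a z" and "poly (g_poly n a) z \<noteq> 0"
  shows "(l + m * v / poly (g_poly n a) z) * (l - m * v / poly (g_poly n a) z) =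
         poly (pencil_norm_poly n a l m) z / poly (g_poly n a) z"
proof -
  have "(l + m * v / poly (g_poly n a) z) * (l - m * v / poly (g_poly n a) z) =
        l\<^sup>2 - m\<^sup>2 * v\<^sup>2 / (poly (g_poly n a) z)\<^sup>2"
    using assms(2) by (simp add: field_simps power2_eq_square)
  then show ?thesis
    using assms by (simp add: hf_eq_g_h pencil_norm_poly_def field_simps power2_eq_square)
qed

lemma pencil_norm_poly_root_on_curve:
  assumes "m \<noteq> 0" and "poly (pencil_norm_poly n a l m) z = 0"
  shows "(- (l / m) * poly (g_poly n a) z)\<^sup>2 = hf n a z"
proof -
  have "l\<^sup>2 * poly (g_poly n a) z = (-1) ^ n * m\<^sup>2 * poly (h_poly n a) z"
    using assms(2) by (simp add: pencil_norm_poly_def)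
  then show ?thesis
    using assms(1) by (simp add: hf_eq_g_h power_mult_distrib power_divide field_simps power2_eq_square)
qed

lemma pencil_fun_zero_imp_norm_root:
  assumes "v\<^sup>2 = hf n a z" "poly (g_poly n a) z \<noteq> 0" and "l + m * v / poly (g_poly n a) z = 0"
  shows "poly (pencil_norm_poly n a l m) z = 0"
  using pencil_norm_poly_eq[OF assms(1,2), of l m] assms(2,3) by simp

lemma zorder_pencil_fun_regular_zero:
  assumes v0: "v0 \<noteq> 0" "v0\<^sup>2 = hf n a z0" and g: "poly (g_poly n a) z0 \<noteq> 0" and l: "l \<noteq> 0"
    and zero: "l + m * v0 / poly (g_poly n a) z0 = 0"
    and N: "pencil_norm_poly n a l m \<noteq> 0"
  shows "zorder (pencil_fun n a l m (Aff v0 z0)) 0 = order z0 (pencil_norm_poly n a l m)"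
proof -
  define k where "k = order z0 (pencil_norm_poly n a l m)"
  obtain R where R: "pencil_norm_poly n a l m = [:-z0, 1:] ^ k * R" "\<not> [:-z0, 1:] dvd R"
    using order_decomp[OF N] unfolding k_def by blast
  have R0: "poly R z0 \<noteq> 0"
    using R(2) by (simp add: poly_eq_0_iff_dvd)
  define W G where "W = sqrt_branch n a v0 z0" and "G t = poly (g_poly n a) (z0 + t)" for t
  define psi_conj where "psi_conj t = l - m * W t / G t" for t
  have G0: "G 0 \<noteq> 0"
    using g by (simp add: G_def)
  have psi_conj: "psi_conj analytic_on {0}" "psi_conj 0 = 2 * l"
    using v0 G0 zero unfolding psi_conj_def W_def G_def
    by (auto intro!: analytic_intros simp: sqrt_branch_0 add_eq_0_iff)
  define h where "h t = poly R (z0 + t) / (G t * psi_conj t)" for t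
  have h: "h analytic_on {0}" "h 0 \<noteq> 0"
    using psi_conj G0 R0 l unfolding h_def G_def by (auto intro!: analytic_intros)
  have "\<forall>\<^sub>F t in at 0. G t * psi_conj t \<noteq> 0"
    using psi_conj G0 l unfolding G_def
    by (intro analytic_at_neq_imp_eventually_neq) (auto intro!: analytic_intros)
  then have "\<forall>\<^sub>F t in at 0. pencil_fun n a l m (Aff v0 z0) t = h t * (t - 0) powi int k"
  proof eventually_elim
    case (elim t)
    then have "G t \<noteq> 0" "psi_conj t \<noteq> 0"
      by auto
    have "(l + m * W t / G t) * psi_conj t = poly (pencil_norm_poly n a l m) (z0 + t) / G t"
      unfolding psi_conj_def G_def using \<open>G t \<noteq> 0\<close> sqrt_branch_square[OF v0(1)]
      by (intro pencil_norm_poly_eq) (simp_all add: W_def G_def)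
    also have "\<dots> = t ^ k * poly R (z0 + t) / G t"
      by (simp add: R(1) poly_power)
    finally have "l + m * W t / G t = t ^ k * poly R (z0 + t) / (G t * psi_conj t)"
      using \<open>G t \<noteq> 0\<close> \<open>psi_conj t \<noteq> 0\<close> by (simp add: field_simps)
    then show ?case
      by (simp add: pencil_fun_regular[OF v0(1)] W_def G_def h_def mult.commute)
  qed
  then show ?thesis
    unfolding k_def by (rule zorder_eqI_eventually[OF h])
qed

definition interval_fun :: "nat \<Rightarrow> (nat \<Rightarrow> real) \<Rightarrow> real \<Rightarrow> real \<Rightarrow> real" where
  "interval_fun n a c x = c * (\<Prod>i\<in>{1..n}. x - a i) - (\<Prod>i\<in>{n+1..2*n}. a i - x)"

definition interval_poly :: "nat \<Rightarrow> (nat \<Rightarrow> real) \<Rightarrow> real \<Rightarrow> complex poly" where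
  "interval_poly n a c = smult (complex_of_real c) (g_poly n a) - h_poly n a"

lemma poly_interval_poly:
  "poly (interval_poly n a c) (complex_of_real x) = complex_of_real (interval_fun n a c x)"
  by (simp add: interval_poly_def interval_fun_def g_poly_def poly_h_poly)

lemma pencil_norm_poly_real:
  assumes "(-1) ^ n * k\<^sup>2 = complex_of_real c"
  shows "pencil_norm_poly n a (k * m) m = smult ((-1) ^ n * m\<^sup>2) (interval_poly n a c)"
proof -
  have "(k * m)\<^sup>2 = ((-1) ^ n * m\<^sup>2) * complex_of_real c"
    by (simp flip: assms add: power_mult_distrib algebra_simps power2_eq_square)
  then show ?thesis
    by (simp add: pencil_norm_poly_def interval_poly_def smult_diff_right)
qed

lemma pencil_norm_poly_real_ratio:
  assumes "m \<noteq> 0" and "cnj (l / m) = (-1) ^ n * (l / m)"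
  shows "pencil_norm_poly n a l m = smult ((-1) ^ n * m\<^sup>2) (interval_poly n a ((cmod (l / m))\<^sup>2))"
proof -
  have "complex_of_real ((cmod (l / m))\<^sup>2) = (l / m) * cnj (l / m)"
    by (rule complex_norm_square)
  also have "\<dots> = (-1) ^ n * (l / m)\<^sup>2"
    using assms(2) by (simp add: power2_eq_square)
  finally show ?thesis
    using pencil_norm_poly_real[of n "l / m" _ a m] assms(1) by simp
qed

lemma poly_pderiv_root_poly:
  "poly (pderiv (root_poly a I)) (complex_of_real x) =
     complex_of_real (\<Sum>j\<in>I. \<Prod>i\<in>I - {j}. x - a i)"
  by (simp add: root_poly_def pderiv_prod pderiv_pCons poly_sum poly_prod)

lemma poly_pderiv_h_poly:
  "poly (pderiv (h_poly n a)) (complex_of_real x) =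
     - complex_of_real (\<Sum>j\<in>{n+1..2*n}. \<Prod>i\<in>{n+1..2*n} - {j}. a i - x)"
  by (simp add: h_poly_def pderiv_prod pderiv_pCons poly_sum poly_prod sum_negf)

section \<open>Ordered branch points\<close>

locale real_branch_points =
  fixes n :: nat and a :: "nat \<Rightarrow> real"
  assumes n_ge_1: "n \<ge> 1" and strict_mono_a: "strict_mono_on {1..2*n} a"
begin

lemma a_less_iff: "i \<in> {1..2*n} \<Longrightarrow> j \<in> {1..2*n} \<Longrightarrow> a i < a j \<longleftrightarrow> i < j"
  and a_le_iff: "i \<in> {1..2*n} \<Longrightarrow> j \<in> {1..2*n} \<Longrightarrow> a i \<le> a j \<longleftrightarrow> i \<le> j"
  and branch_eq_iff:
    "i \<in> {1..2*n} \<Longrightarrow> j \<in> {1..2*n} \<Longrightarrow> complex_of_real (a i) = complex_of_real (a j) \<longleftrightarrow> i = j"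
  using strict_mono_on_less[OF strict_mono_a] strict_mono_on_less_eq[OF strict_mono_a]
    strict_mono_on_eq[OF strict_mono_a] by auto

lemma order_root_poly:
  assumes "I \<subseteq> {1..2*n}" "i \<in> {1..2*n}"
  shows "order (complex_of_real (a i)) (root_poly a I) = (if i \<in> I then 1 else 0)"
proof -
  have fin: "finite I"
    using assms(1) finite_subset by blast
  then have "root_poly a I = [:- complex_of_real (a i), 1:] ^ (if i \<in> I then 1 else 0) * root_poly a (I - {i})"
    by (auto simp: root_poly_def prod.remove)
  moreover have "poly (root_poly a (I - {i})) (complex_of_real (a i)) \<noteq> 0"
    using fin assms branch_eq_iff by (auto simp: prod_zero_iff)
  ultimately show ?thesis
    by (simp add: order_mult order_power_n_n order_0I)
qed

lemma order_f_poly: "i \<in> {1..2*n} \<Longrightarrow> order (complex_of_real (a i)) (f_poly n a) = 1"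
  and order_g_poly: "i \<in> {1..2*n} \<Longrightarrow> order (complex_of_real (a i)) (g_poly n a) = (if i \<le> n then 1 else 0)"
  by (auto simp: f_poly_def g_poly_def order_root_poly)

lemma order_root_poly_le_1:
  assumes "I \<subseteq> {1..2*n}"
  shows "order z (root_poly a I) \<le> 1"
proof (cases "\<exists>i\<in>I. z = complex_of_real (a i)")
  case True
  then show ?thesis
    using order_root_poly[OF assms] assms by fastforce
next
  case False
  then have "poly (root_poly a I) z \<noteq> 0"
    using finite_subset[OF assms] by (auto simp: prod_zero_iff)
  then show ?thesis
    by (simp add: order_0I)
qed

lemma order_f_poly_le_1: "order z (f_poly n a) \<le> 1"
  and order_g_poly_le_1: "order z (g_poly n a) \<le> 1"
  using order_root_poly_le_1[of "{1..2*n}" z] order_root_poly_le_1[of "{1..n}" z]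
  by (auto simp: f_poly_def g_poly_def)

lemma poly_g_poly_eq_0_iff: "i \<in> {1..2*n} \<Longrightarrow> poly (g_poly n a) (complex_of_real (a i)) = 0 \<longleftrightarrow> i \<le> n"
  using order_g_poly[of i] order_root by (metis g_poly_nonzero one_neq_zero)

lemma square_eq_f_poly_square_imp_zero:
  fixes P0 P1 :: "complex poly"
  assumes eq: "P0 * P0 = P1 * P1 * f_poly n a"
  shows "P0 = 0 \<and> P1 = 0"
proof (cases "P1 = 0")
  case False
  define z where "z = complex_of_real (a 1)"
  have "P0 \<noteq> 0"
    using eq False by auto
  then have "order z (P0 * P0) = 2 * order z P0"
    by (simp add: order_mult)
  moreover have "order z (P1 * P1 * f_poly n a) = 2 * order z P1 + 1"
    using False n_ge_1 order_f_poly[of 1] by (simp add: order_mult z_def)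
  ultimately have "2 * order z P0 = 2 * order z P1 + 1"
    using eq by simp
  then show ?thesis
    by presburger
qed (use eq in simp)

lemma hf_branch_param:
  assumes "i \<in> {1..2*n}"
  shows "hf n a (complex_of_real (a i) + t\<^sup>2) = t\<^sup>2 * other_factors n a (complex_of_real (a i)) (complex_of_real (a i) + t\<^sup>2)"
proof -
  have "{j\<in>{1..2*n}. complex_of_real (a j) \<noteq> complex_of_real (a i)} = {1..2*n} - {i}"
    using assms branch_eq_iff by auto
  then show ?thesis
    using assms unfolding hf_def other_factors_def by (simp add: prod.remove)
qed

lemma Sigma_pts_cases:
  assumes "p \<in> Sigma_pts n a"
  obtains (regular) v z where "p = Aff v z" "v\<^sup>2 = hf n a z" "v \<noteq> 0"
    | (branch) i where "i \<in> {1..2*n}" "p = ram_pt a i"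
    | (infinity) u where "p = Inf u" "u = 1 \<or> u = -1"
  using assms unfolding Sigma_pts_def ram_pt_def by (smt (verit) UnE hf_eq_0_iff insertE
      mem_Collect_eq power_zero_numeral singleton_iff zero_eq_power2)

lemma chart_on_curve:
  assumes "p \<in> Sigma_pts n a" "t \<noteq> 0"
  shows "(fst (chart n a p t))\<^sup>2 = hf n a (snd (chart n a p t))"
  using assms(1)
proof (cases rule: Sigma_pts_cases)
  case (branch i)
  have "(t * branch_unit n a (complex_of_real (a i)) t)\<^sup>2 =
        t\<^sup>2 * other_factors n a (complex_of_real (a i)) (complex_of_real (a i) + t\<^sup>2)"
    using other_factors_nonzero by (simp add: branch_unit_def power_mult_distrib)
  then show ?thesis
    using branch by (simp add: ram_pt_def chart_branch hf_branch_param)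
next
  case (infinity u)
  then have "u\<^sup>2 = 1"
    by auto
  then show ?thesis
    using infinity assms(2) by (simp add: chart_infinity power_mult_distrib infinity_branch_square)
qed (simp_all add: chart_regular sqrt_branch_square)

lemma eventually_poly_chart_nonzero:
  assumes "p \<in> Sigma_pts n a" and "R \<noteq> 0"
  shows "\<forall>\<^sub>F t in at 0. poly R (snd (chart n a p t)) \<noteq> 0"
  using assms(1)
proof (cases rule: Sigma_pts_cases)
  case (regular v z)
  have "\<forall>\<^sub>F t in at 0. poly R (t + z) \<noteq> 0"
    using eventually_poly_nonzero_at[OF assms(2), of z] by (simp add: eventually_at_to_0[of _ z])
  then show ?thesis
    using regular by (simp add: chart_regular add.commute)
next
  case (branch i)
  define z where "z = complex_of_real (a i)"
  have "filterlim (\<lambda>t. z + t\<^sup>2) (at z) (at (0::complex))"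
    by (intro filterlim_atI) (auto intro!: tendsto_eq_intros simp: eventually_at_filter)
  from eventually_compose_filterlim[OF eventually_poly_nonzero_at[OF assms(2)] this]
  show ?thesis
    using branch by (simp add: z_def ram_pt_def chart_branch)
next
  case (infinity u)
  have "filterlim (\<lambda>t::complex. 1 / t) at_infinity (at 0)"
    using filterlim_inverse_at_infinity by (simp add: inverse_eq_divide[symmetric])
  from eventually_compose_filterlim[OF eventually_poly_nonzero_at_infinity[OF assms(2)] this]
  show ?thesis
    using infinity by (simp add: chart_infinity)
qed

lemma chart_meromorphic:
  assumes "p \<in> Sigma_pts n a"
  shows "(\<lambda>t. fst (chart n a p t)) meromorphic_on {0} \<and> (\<lambda>t. snd (chart n a p t)) meromorphic_on {0}"
  using assms
proof (cases rule: Sigma_pts_cases)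
  case (regular v z)
  then show ?thesis
    by (auto simp: chart_regular intro!: analytic_on_imp_meromorphic_on analytic_intros)
next
  case (branch i)
  then show ?thesis
    by (auto simp: chart_branch ram_pt_def intro!: analytic_on_imp_meromorphic_on analytic_intros)
next
  case (infinity u)
  then show ?thesis
    by (auto simp: chart_infinity intro!: meromorphic_intros)
qed

lemma rf_eval_chart_meromorphic:
  assumes "p \<in> Sigma_pts n a"
  shows "(\<lambda>t. rf_eval (P0, P1, Q) (chart n a p t)) meromorphic_on {0}"
proof -
  have "(\<lambda>t. (poly P0 (snd (chart n a p t)) + poly P1 (snd (chart n a p t)) * fst (chart n a p t)) /
       poly Q (snd (chart n a p t))) meromorphic_on {0}"
    using chart_meromorphic[OF assms] by (intro meromorphic_intros) auto
  then show ?thesis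
    by (simp only: rf_eval_pair)
qed

lemma rf_eval_chart_frequently_nonzero:
  assumes "p \<in> Sigma_pts n a" and "rf_nonzero (P0, P1, Q)"
  shows "\<exists>\<^sub>F t in at 0. rf_eval (P0, P1, Q) (chart n a p t) \<noteq> 0"
proof -
  define N where "N = P0 * P0 - P1 * P1 * f_poly n a"
  have "N \<noteq> 0"
    using assms(2) square_eq_f_poly_square_imp_zero by (auto simp: N_def)
  with assms(2) have NQ: "N * Q \<noteq> 0"
    by simp
  have "\<forall>\<^sub>F t in at 0. rf_eval (P0, P1, Q) (chart n a p t) \<noteq> 0"
    using eventually_poly_chart_nonzero[OF assms(1) NQ] eventually_at_ball'[of 1 0 UNIV, OF zero_less_one]
  proof eventually_elim
    case (elim t)
    define v z where "v = fst (chart n a p t)" and "z = snd (chart n a p t)"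
    have "v\<^sup>2 = hf n a z"
      unfolding v_def z_def using elim(2) by (intro chart_on_curve[OF assms(1)]) auto
    then have "poly N z = (poly P0 z + poly P1 z * v) * (poly P0 z - poly P1 z * v)"
      by (simp add: N_def algebra_simps power2_eq_square)
    moreover have "poly N z \<noteq> 0" "poly Q z \<noteq> 0"
      using elim(1) by (simp_all add: z_def)
    ultimately show ?case
      by (simp add: rf_eval_pair v_def z_def)
  qed
  then show ?thesis
    by (simp add: eventually_frequently)
qed

lemma D_L_Aff: "v \<noteq> 0 \<Longrightarrow> D_L n a (Aff v z) = 0"
  and D_L_Inf: "D_L n a (Inf u) = 0"
  by (auto simp: D_L_def ram_pt_def)

lemma D_L_ram_pt:
  assumes "i \<in> {1..2*n}"
  shows "D_L n a (ram_pt a i) = (if i \<le> n then 1 else 0)"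
proof -
  have "ram_pt a i \<in> ram_pt a ` {1..n} \<longleftrightarrow> i \<le> n"
    using assms branch_eq_iff by (force simp: ram_pt_def)
  then show ?thesis
    by (simp add: D_L_def)
qed

lemma eventually_bounded_at_point:
  assumes "rf_nonzero (P0, P1, Q)" "p \<in> Sigma_pts n a"
    and "0 \<le> D_L n a p + ord_at n a (P0, P1, Q) p" and "D_L n a p = int m"
  shows "\<exists>C. \<forall>\<^sub>F t in at 0. norm (rf_eval (P0, P1, Q) (chart n a p t)) * norm t ^ m \<le> C"
  using assms
  by (intro eventually_bounded_of_zorder_ge rf_eval_chart_meromorphic rf_eval_chart_frequently_nonzero)
     (auto simp: ord_at_def)

subsection \<open>Members of the pencil\<close>

lemma eventually_bounded_trace_norm_regular:
  fixes P0 P1 Q :: "complex poly"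
  assumes nz: "rf_nonzero (P0, P1, Q)"
    and pos: "\<And>p. p \<in> Sigma_pts n a \<Longrightarrow> 0 \<le> D_L n a p + ord_at n a (P0, P1, Q) p"
    and z0: "hf n a z0 \<noteq> 0"
  shows "\<exists>C. \<forall>\<^sub>F z in at z0. norm (poly (P0 * P0) z / poly (Q * Q) z) \<le> C \<and>
      norm (poly (P1 * P1 * f_poly n a) z / poly (Q * Q) z) \<le> C"
proof -
  define v0 where "v0 = csqrt (hf n a z0)"
  have v0: "v0 \<noteq> 0" "v0\<^sup>2 = hf n a z0"
    using z0 by (auto simp: v0_def)
  have p: "Aff v0 z0 \<in> Sigma_pts n a" "Aff (- v0) z0 \<in> Sigma_pts n a"
    using v0 by (auto simp: Sigma_pts_def)
  have "D_L n a (Aff v0 z0) = int 0" "D_L n a (Aff (- v0) z0) = int 0"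
    using v0 by (simp_all add: D_L_Aff)
  then obtain C1 C2 where
    "\<forall>\<^sub>F t in at 0. norm (rf_eval (P0, P1, Q) (chart n a (Aff v0 z0) t)) * norm t ^ 0 \<le> C1"
    "\<forall>\<^sub>F t in at 0. norm (rf_eval (P0, P1, Q) (chart n a (Aff (- v0) z0) t)) * norm t ^ 0 \<le> C2"
    using eventually_bounded_at_point[OF nz p(1) pos[OF p(1)]]
      eventually_bounded_at_point[OF nz p(2) pos[OF p(2)]] by blast
  then have "\<forall>\<^sub>F t in at 0. norm (rf_eval (P0, P1, Q) (sqrt_branch n a v0 z0 t, z0 + t)) * norm t ^ 0 \<le> C1"
    "\<forall>\<^sub>F t in at 0. norm (rf_eval (P0, P1, Q) (- sqrt_branch n a v0 z0 t, z0 + t)) * norm t ^ 0 \<le> C2"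
    using v0(1) by (simp_all add: chart_regular sqrt_branch_uminus)
  from eventually_bounded_trace_norm[OF this] sqrt_branch_square[OF v0(1)]
  have "\<forall>\<^sub>F t in at 0. norm (poly P0 (z0 + t) / poly Q (z0 + t)) \<le> (C1 + C2) / 2 \<and>
      norm (poly (P1 * P1 * f_poly n a) (z0 + t) / poly (Q * Q) (z0 + t)) \<le> ((C1 + C2) / 2)\<^sup>2"
    by simp
  then have "\<forall>\<^sub>F t in at 0. norm (poly (P0 * P0) (z0 + t) / poly (Q * Q) (z0 + t)) \<le> ((C1 + C2) / 2)\<^sup>2 \<and>
      norm (poly (P1 * P1 * f_poly n a) (z0 + t) / poly (Q * Q) (z0 + t)) \<le> ((C1 + C2) / 2)\<^sup>2"
  proof eventually_elim
    case (elim t)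
    have "norm (poly (P0 * P0) (z0 + t) / poly (Q * Q) (z0 + t)) = (norm (poly P0 (z0 + t) / poly Q (z0 + t)))\<^sup>2"
      by (simp add: norm_mult norm_divide power2_eq_square)
    also have "\<dots> \<le> ((C1 + C2) / 2)\<^sup>2"
      using elim by (intro power_mono) auto
    finally show ?case
      using elim by blast
  qed
  then show ?thesis
    by (auto simp: eventually_at_to_0[of _ z0] add.commute)
qed

lemma eventually_bounded_trace_norm_branch:
  fixes P0 P1 Q :: "complex poly"
  assumes nz: "rf_nonzero (P0, P1, Q)"
    and pos: "\<And>p. p \<in> Sigma_pts n a \<Longrightarrow> 0 \<le> D_L n a p + ord_at n a (P0, P1, Q) p"
    and i: "i \<in> {1..2*n}"
  defines "z0 \<equiv> complex_of_real (a i)"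
  shows "\<exists>C. \<forall>\<^sub>F z in at z0. norm (poly (P0 * P0) z / poly (Q * Q) z) * norm (z - z0) ^ order z0 (g_poly n a) \<le> C \<and>
      norm (poly (P1 * P1 * f_poly n a) z / poly (Q * Q) z) * norm (z - z0) ^ order z0 (g_poly n a) \<le> C"
proof -
  define m where "m = order z0 (g_poly n a)"
  have p: "ram_pt a i \<in> Sigma_pts n a"
    using i by (auto simp: Sigma_pts_def ram_pt_def hf_eq_0_iff)
  have "D_L n a (ram_pt a i) = int m"
    using D_L_ram_pt[OF i] order_g_poly[OF i] by (simp add: m_def z0_def)
  then obtain C where C: "\<forall>\<^sub>F t in at 0. norm (rf_eval (P0, P1, Q) (chart n a (ram_pt a i) t)) * norm t ^ m \<le> C"
    using eventually_bounded_at_point[OF nz p pos[OF p]] by blast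
  define V where "V t = t * branch_unit n a z0 t" for t
  have chart: "chart n a (ram_pt a i) t = (V t, z0 + t\<^sup>2)"
    and chart_uminus: "chart n a (ram_pt a i) (- t) = (- V t, z0 + t\<^sup>2)" for t
    by (simp_all add: ram_pt_def z0_def V_def chart_branch branch_unit_even)
  from C have "\<forall>\<^sub>F t in filtermap uminus (at 0). norm (rf_eval (P0, P1, Q) (chart n a (ram_pt a i) t)) * norm t ^ m \<le> C"
    by (simp add: filtermap_at_minus)
  then have "\<forall>\<^sub>F t in at 0. norm (rf_eval (P0, P1, Q) (- V t, z0 + t\<^sup>2)) * norm t ^ m \<le> C"
    by (simp add: eventually_filtermap chart_uminus)
  moreover have "\<forall>\<^sub>F t in at 0. (V t)\<^sup>2 = hf n a (z0 + t\<^sup>2)"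
    using eventually_at_ball'[of 1 0 UNIV, OF zero_less_one]
    by eventually_elim (use chart_on_curve[OF p] in \<open>simp add: chart\<close>)
  ultimately have "\<forall>\<^sub>F t in at 0. norm (poly P0 (z0 + t\<^sup>2) / poly Q (z0 + t\<^sup>2)) * norm t ^ m \<le> C \<and>
      norm (poly (P1 * P1 * f_poly n a) (z0 + t\<^sup>2) / poly (Q * Q) (z0 + t\<^sup>2)) * norm t ^ (2 * m) \<le> C\<^sup>2"
    using eventually_bounded_trace_norm[of P0 P1 Q V "\<lambda>t. z0 + t\<^sup>2" m C C] C by (simp add: chart)
  then have "\<forall>\<^sub>F t in at 0. norm (poly (P0 * P0) (z0 + t\<^sup>2) / poly (Q * Q) (z0 + t\<^sup>2)) * (norm t ^ 2) ^ m \<le> C\<^sup>2 \<and>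
      norm (poly (P1 * P1 * f_poly n a) (z0 + t\<^sup>2) / poly (Q * Q) (z0 + t\<^sup>2)) * (norm t ^ 2) ^ m \<le> C\<^sup>2"
  proof eventually_elim
    case (elim t)
    have square: "(norm (x / y) * r ^ m)\<^sup>2 = norm (x * x / (y * y)) * (r\<^sup>2) ^ m" for x y :: complex and r :: real
      by (simp add: norm_divide norm_mult power2_eq_square power_mult_distrib power_mult[symmetric] mult.commute)
    have "(norm (poly P0 (z0 + t\<^sup>2) / poly Q (z0 + t\<^sup>2)) * norm t ^ m)\<^sup>2 \<le> C\<^sup>2"
      using elim by (intro power_mono) auto
    moreover have "(norm t ^ 2) ^ m = norm t ^ (2 * m)"
      by (simp add: power_mult)
    ultimately show ?case
      using elim by (simp only: square poly_mult)
  qed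
  then show ?thesis
    unfolding m_def[symmetric] by (intro exI[of _ "C\<^sup>2"] eventually_at_of_square_param[where Phi = "\<lambda>z s.
        norm (poly (P0 * P0) z / poly (Q * Q) z) * s ^ m \<le> C\<^sup>2 \<and>
        norm (poly (P1 * P1 * f_poly n a) z / poly (Q * Q) z) * s ^ m \<le> C\<^sup>2"])
qed

lemma eventually_bounded_trace_norm_finite:
  fixes P0 P1 Q :: "complex poly" and z0 :: complex
  assumes nz: "rf_nonzero (P0, P1, Q)"
    and pos: "\<And>p. p \<in> Sigma_pts n a \<Longrightarrow> 0 \<le> D_L n a p + ord_at n a (P0, P1, Q) p"
  defines "m \<equiv> order z0 (g_poly n a)"
  shows "\<exists>C. \<forall>\<^sub>F z in at z0. norm (poly (P0 * P0) z / poly (Q * Q) z) * norm (z - z0) ^ m \<le> C \<and>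
      norm (poly (P1 * P1 * f_poly n a) z / poly (Q * Q) z) * norm (z - z0) ^ m \<le> C"
proof (cases "hf n a z0 = 0")
  case True
  then obtain i where "i \<in> {1..2*n}" "z0 = complex_of_real (a i)"
    using hf_eq_0_iff by blast
  then show ?thesis
    using eventually_bounded_trace_norm_branch[OF nz pos] by (simp add: m_def)
next
  case False
  then have "m = 0"
    by (simp add: m_def order_0I hf_eq_g_h)
  then show ?thesis
    using eventually_bounded_trace_norm_regular[OF nz pos False] by simp
qed

lemma pencil_function_degree_le:
  fixes P0 P1 Q :: "complex poly"
  assumes nz: "rf_nonzero (P0, P1, Q)"
    and pos: "\<And>p. p \<in> Sigma_pts n a \<Longrightarrow> 0 \<le> D_L n a p + ord_at n a (P0, P1, Q) p"
  shows "degree P0 \<le> degree Q" and "degree (g_poly n a * P1) \<le> degree Q"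
proof -
  have Q: "Q \<noteq> 0"
    using nz by simp
  have p: "Inf 1 \<in> Sigma_pts n a" "Inf (-1) \<in> Sigma_pts n a"
    by (auto simp: Sigma_pts_def)
  obtain C1 where
    "\<forall>\<^sub>F t in at 0. norm (rf_eval (P0, P1, Q) (chart n a (Inf 1) t)) * norm t ^ 0 \<le> C1"
    using eventually_bounded_at_point[OF nz p(1) pos[OF p(1)]] by (auto simp: D_L_Inf)
  moreover obtain C2 where
    "\<forall>\<^sub>F t in at 0. norm (rf_eval (P0, P1, Q) (chart n a (Inf (-1)) t)) * norm t ^ 0 \<le> C2"
    using eventually_bounded_at_point[OF nz p(2) pos[OF p(2)]] by (auto simp: D_L_Inf)
  moreover have "\<forall>\<^sub>F t in at 0. (infinity_branch n a t)\<^sup>2 = hf n a (1 / t)"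
    using eventually_at_ball'[of 1 0 UNIV, OF zero_less_one]
    by eventually_elim (simp add: infinity_branch_square)
  ultimately have ev: "\<forall>\<^sub>F t in at 0. norm (poly P0 (1/t) / poly Q (1/t)) \<le> (C1 + C2) / 2 \<and>
      norm (poly (P1 * P1 * f_poly n a) (1/t) / poly (Q * Q) (1/t)) \<le> ((C1 + C2) / 2)\<^sup>2"
    using eventually_bounded_trace_norm[of P0 P1 Q "infinity_branch n a" "\<lambda>t. 1 / t" 0 C1 C2]
    by (simp add: chart_infinity)
  show "degree P0 \<le> degree Q"
  proof (cases "P0 = 0")
    case False
    show ?thesis
      by (rule degree_le_of_bounded_ratio_at_infinity[OF False Q]) (rule eventually_mono[OF ev], blast)
  qed simp
  show "degree (g_poly n a * P1) \<le> degree Q"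
  proof (cases "P1 = 0")
    case False
    then have nonzero: "P1 * P1 * f_poly n a \<noteq> 0" "Q * Q \<noteq> 0"
      using Q by simp_all
    have "degree (P1 * P1 * f_poly n a) \<le> degree (Q * Q)"
      by (rule degree_le_of_bounded_ratio_at_infinity[OF nonzero]) (rule eventually_mono[OF ev], blast)
    then show ?thesis
      using False Q by (simp add: degree_mult_eq degree_f_poly degree_g_poly)
  qed simp
qed

lemma order_le_pencil_function:
  fixes P0 P1 Q :: "complex poly"
  assumes nz: "rf_nonzero (P0, P1, Q)"
    and pos: "\<And>p. p \<in> Sigma_pts n a \<Longrightarrow> 0 \<le> D_L n a p + ord_at n a (P0, P1, Q) p"
  shows "P0 \<noteq> 0 \<Longrightarrow> order z Q \<le> order z P0"
    and "P1 \<noteq> 0 \<Longrightarrow> order z Q \<le> order z P1 + order z (g_poly n a)"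
proof -
  define m where "m = order z (g_poly n a)"
  obtain C where C: "\<forall>\<^sub>F w in at z. norm (poly (P0 * P0) w / poly (Q * Q) w) * norm (w - z) ^ m \<le> C \<and>
      norm (poly (P1 * P1 * f_poly n a) w / poly (Q * Q) w) * norm (w - z) ^ m \<le> C"
    using eventually_bounded_trace_norm_finite[OF nz pos] unfolding m_def by blast
  have QQ: "Q * Q \<noteq> 0" and order_QQ: "order z (Q * Q) = 2 * order z Q"
    using nz by (simp_all add: order_mult)
  have m: "m \<le> 1"
    using order_g_poly_le_1 by (simp add: m_def)
  show "order z Q \<le> order z P0" if "P0 \<noteq> 0"
  proof -
    have "order z (Q * Q) \<le> order z (P0 * P0) + m"
      using that by (intro order_le_of_bounded_ratio[OF _ QQ eventually_mono[OF C]]) auto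
    then show ?thesis
      using order_QQ m that by (simp add: order_mult)
  qed
  show "order z Q \<le> order z P1 + m" if "P1 \<noteq> 0"
  proof -
    have "order z (Q * Q) \<le> order z (P1 * P1 * f_poly n a) + m"
      using that by (intro order_le_of_bounded_ratio[OF _ QQ eventually_mono[OF C]]) auto
    then show ?thesis
      using order_QQ m order_f_poly_le_1[of z] that by (simp add: order_mult)
  qed
qed

lemma pencil_function_smult_form:
  fixes P0 P1 Q :: "complex poly"
  assumes nz: "rf_nonzero (P0, P1, Q)"
    and pos: "\<And>p. p \<in> Sigma_pts n a \<Longrightarrow> 0 \<le> D_L n a p + ord_at n a (P0, P1, Q) p"
  obtains l m where "l \<noteq> 0 \<or> m \<noteq> 0" "P0 = smult l Q" "g_poly n a * P1 = smult m Q"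
proof -
  have Q: "Q \<noteq> 0"
    using nz by simp
  have "Q dvd P0"
  proof (cases "P0 = 0")
    case False
    then show ?thesis
      using order_le_pencil_function(1)[OF nz pos] by (intro dvd_if_order_le[OF Q])
  qed simp
  then obtain l where l: "P0 = smult l Q"
    using pencil_function_degree_le[OF nz pos] Q by (elim smult_if_dvd_degree_le)
  have "Q dvd g_poly n a * P1"
  proof (cases "P1 = 0")
    case False
    then show ?thesis
      using order_le_pencil_function(2)[OF nz pos] by (intro dvd_if_order_le[OF Q]) (simp add: order_mult add.commute)
  qed simp
  then obtain m where m: "g_poly n a * P1 = smult m Q"
    using pencil_function_degree_le[OF nz pos] Q by (elim smult_if_dvd_degree_le)
  have "l \<noteq> 0 \<or> m \<noteq> 0"
    using nz l m by auto
  with l m show ?thesis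
    using that by blast
qed

lemma eventually_rf_eval_eq_pencil_fun:
  assumes "P0 = smult l Q" and "g_poly n a * P1 = smult m Q" and "Q \<noteq> 0"
    and "p \<in> Sigma_pts n a"
  shows "\<forall>\<^sub>F t in at 0. rf_eval (P0, P1, Q) (chart n a p t) = pencil_fun n a l m p t"
proof -
  have "\<forall>\<^sub>F t in at 0. poly (Q * g_poly n a) (snd (chart n a p t)) \<noteq> 0"
    using assms(3) by (intro eventually_poly_chart_nonzero[OF assms(4)]) simp
  then show ?thesis
  proof (rule eventually_mono)
    fix t
    define v z where "v = fst (chart n a p t)" and "z = snd (chart n a p t)"
    assume "poly (Q * g_poly n a) (snd (chart n a p t)) \<noteq> 0"
    then have "poly Q z \<noteq> 0" "poly (g_poly n a) z \<noteq> 0"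
      by (simp_all add: z_def)
    moreover have "poly (g_poly n a) z * poly P1 z = m * poly Q z"
      using arg_cong[OF assms(2), of "\<lambda>P. poly P z"] by simp
    ultimately show "rf_eval (P0, P1, Q) (chart n a p t) = pencil_fun n a l m p t"
      using assms(1) by (simp add: rf_eval_pair pencil_fun_def field_simps flip: v_def z_def)
  qed
qed

lemma pencil_fun_frequently_nonzero:
  assumes "l \<noteq> 0 \<or> m \<noteq> 0" and "p \<in> Sigma_pts n a"
  shows "\<exists>\<^sub>F t in at 0. pencil_fun n a l m p t \<noteq> 0"
proof -
  let ?\<phi> = "(smult l (g_poly n a), [:m:], g_poly n a)"
  have "\<exists>\<^sub>F t in at 0. rf_eval ?\<phi> (chart n a p t) \<noteq> 0"
    using assms by (intro rf_eval_chart_frequently_nonzero) auto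
  moreover have "\<forall>\<^sub>F t in at 0. rf_eval ?\<phi> (chart n a p t) = pencil_fun n a l m p t"
    using assms(2) by (intro eventually_rf_eval_eq_pencil_fun) auto
  ultimately have "\<exists>\<^sub>F t in at 0. rf_eval ?\<phi> (chart n a p t) \<noteq> 0 \<and>
      rf_eval ?\<phi> (chart n a p t) = pencil_fun n a l m p t"
    by (rule frequently_eventually_frequently)
  then show ?thesis
    by (rule frequently_elim1) auto
qed

lemma pencil_member_eq_pencil_div:
  assumes "D \<in> pencil_members n a"
  obtains l m where "l \<noteq> 0 \<or> m \<noteq> 0" and "\<And>p. p \<in> Sigma_pts n a \<Longrightarrow> D p = pencil_div n a l m p"
proof -
  obtain \<phi> where "rf_nonzero \<phi>" and D_nonneg: "\<And>p. 0 \<le> D p"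
    and "D = (\<lambda>p. D_L n a p + div_of n a \<phi> p)"
    using assms unfolding pencil_members_def by blast
  moreover obtain P0 P1 Q where "\<phi> = (P0, P1, Q)"
    by (cases \<phi>)
  ultimately have nz: "rf_nonzero (P0, P1, Q)" and D: "\<And>p. D p = D_L n a p + div_of n a (P0, P1, Q) p"
    by simp_all
  have D_Sigma: "D p = D_L n a p + ord_at n a (P0, P1, Q) p" if "p \<in> Sigma_pts n a" for p
    using that D by (simp add: div_of_def)
  then have "0 \<le> D_L n a p + ord_at n a (P0, P1, Q) p" if "p \<in> Sigma_pts n a" for p
    using D_nonneg[of p] that by simp
  then obtain l m where lm: "l \<noteq> 0 \<or> m \<noteq> 0" "P0 = smult l Q" "g_poly n a * P1 = smult m Q"
    using pencil_function_smult_form[OF nz] by blast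
  have "D p = pencil_div n a l m p" if "p \<in> Sigma_pts n a" for p
    using D_Sigma[OF that] zorder_cong[OF eventually_rf_eval_eq_pencil_fun[OF lm(2,3) _ that] refl] nz
    by (simp add: pencil_div_def ord_at_def)
  with lm(1) show ?thesis
    using that by blast
qed

subsection \<open>Multiplicities on the central circle\<close>

lemma zorder_pencil_fun_regular_eq_0_iff:
  assumes "l \<noteq> 0 \<or> m \<noteq> 0" and "v \<noteq> 0" "v\<^sup>2 = hf n a z" and "poly (g_poly n a) z \<noteq> 0"
  shows "zorder (pencil_fun n a l m (Aff v z)) 0 = 0 \<longleftrightarrow> l + m * v / poly (g_poly n a) z \<noteq> 0"
proof -
  have "Aff v z \<in> Sigma_pts n a"
    using assms(3) by (simp add: Sigma_pts_def)
  with assms show ?thesis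
    using zorder_eq_0_iff[OF pencil_fun_regular_analytic(1) pencil_fun_frequently_nonzero]
      pencil_fun_regular_analytic(2) by simp
qed

lemma zorder_pencil_fun_branch_upper:
  assumes "i \<in> {n+1..2*n}"
  shows "l \<noteq> 0 \<Longrightarrow> zorder (pencil_fun n a l m (ram_pt a i)) 0 = 0"
    and "l = 0 \<Longrightarrow> m \<noteq> 0 \<Longrightarrow> zorder (pencil_fun n a l m (ram_pt a i)) 0 = 1"
proof -
  define z0 where "z0 = complex_of_real (a i)"
  have g0: "poly (g_poly n a) z0 \<noteq> 0"
    using poly_g_poly_eq_0_iff[of i] assms by (auto simp: z0_def)
  define h where "h t = m * branch_unit n a z0 t / poly (g_poly n a) (z0 + t\<^sup>2)" for t
  have h: "h analytic_on {0}"
    unfolding h_def using g0 by (intro analytic_intros) auto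
  have eq: "pencil_fun n a l m (ram_pt a i) t = l + h t * t" for t
    by (simp add: pencil_fun_branch h_def z0_def field_simps)
  show "zorder (pencil_fun n a l m (ram_pt a i)) 0 = 0" if "l \<noteq> 0"
    unfolding eq using that by (intro zorder_eq_0I analytic_intros h) auto
  show "zorder (pencil_fun n a l m (ram_pt a i)) 0 = 1" if "l = 0" "m \<noteq> 0"
  proof (rule zorder_eqI_eventually[OF h])
    show "h 0 \<noteq> 0"
      using that(2) g0 branch_unit_0 by (simp add: h_def)
    show "\<forall>\<^sub>F t in at 0. pencil_fun n a l m (ram_pt a i) t = h t * (t - 0) powi 1"
      unfolding eq using that(1) by simp
  qed
qed

lemma zorder_pencil_fun_branch_lower:
  assumes "i \<in> {1..n}" and "m \<noteq> 0"
  shows "zorder (pencil_fun n a l m (ram_pt a i)) 0 = -1"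
proof -
  define z0 where "z0 = complex_of_real (a i)"
  define g1 where "g1 = root_poly a ({1..n} - {i})"
  have g: "g_poly n a = [:- z0, 1:] * g1"
    using assms(1) by (simp add: g_poly_def g1_def z0_def root_poly_def prod.remove)
  have g1: "poly g1 z0 \<noteq> 0"
    using assms(1) branch_eq_iff by (auto simp: g1_def z0_def prod_zero_iff)
  define h where "h t = (l * t * poly g1 (z0 + t\<^sup>2) + m * branch_unit n a z0 t) / poly g1 (z0 + t\<^sup>2)" for t
  have h: "h analytic_on {0}" "h 0 \<noteq> 0"
    using g1 assms(2) branch_unit_0 unfolding h_def by (auto intro!: analytic_intros)
  have "\<forall>\<^sub>F t in at 0. poly g1 (z0 + t\<^sup>2) \<noteq> 0"
    using g1 by (intro analytic_at_neq_imp_eventually_neq) (auto intro!: analytic_intros)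
  then have "\<forall>\<^sub>F t in at 0. pencil_fun n a l m (ram_pt a i) t = h t * (t - 0) powi (-1)"
    using eventually_at_ball'[of 1 0 UNIV, OF zero_less_one]
  proof eventually_elim
    case (elim t)
    then have "t \<noteq> 0"
      by auto
    have "poly (g_poly n a) (z0 + t\<^sup>2) = t\<^sup>2 * poly g1 (z0 + t\<^sup>2)"
      by (simp add: g algebra_simps)
    then have "pencil_fun n a l m (ram_pt a i) t = l + m * (t * branch_unit n a z0 t) / (t\<^sup>2 * poly g1 (z0 + t\<^sup>2))"
      by (simp add: pencil_fun_branch flip: z0_def)
    also have "\<dots> = h t * t powi (-1)"
      using \<open>t \<noteq> 0\<close> elim(1) by (simp add: h_def power_int_minus field_simps power2_eq_square)
    finally show ?case
      by simp
  qed
  then show ?thesis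
    by (rule zorder_eqI_eventually[OF h])
qed

lemma lower_le_a_n: "i \<in> {1..n} \<Longrightarrow> a i \<le> a n"
  and upper_ge_a_Suc_n: "i \<in> {n+1..2*n} \<Longrightarrow> a (n+1) \<le> a i"
  using a_le_iff n_ge_1 by auto

lemma interval_fun_strict_mono:
  assumes "c > 0" and "a n \<le> x" "x < y" "y \<le> a (n+1)"
  shows "interval_fun n a c x < interval_fun n a c y"
proof -
  have "(\<Prod>i\<in>{1..n}. x - a i) \<le> (\<Prod>i\<in>{1..n}. y - a i)"
    using assms lower_le_a_n by (intro prod_mono) force
  moreover have "(\<Prod>i\<in>{n+1..2*n}. a i - y) < (\<Prod>i\<in>{n+1..2*n}. a i - x)"
  proof (rule prod_mono_strict[of "n+1"])
    fix i assume "i \<in> {n+1..2*n}"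
    then show "0 \<le> a i - y \<and> a i - y \<le> a i - x" "0 < a i - x"
      using assms upper_ge_a_Suc_n[of i] by auto
  qed (use assms n_ge_1 in auto)
  ultimately show ?thesis
    unfolding interval_fun_def using assms(1) by (smt (verit, best) mult_left_mono)
qed

lemma interval_fun_endpoints:
  assumes "c > 0"
  shows "interval_fun n a c (a n) < 0" and "interval_fun n a c (a (n+1)) > 0"
proof -
  have zero: "(\<Prod>i\<in>{1..n}. a n - a i) = 0" "(\<Prod>i\<in>{n+1..2*n}. a i - a (n+1)) = 0"
    by (rule prod_zero, simp, use n_ge_1 in force)+
  have "(\<Prod>i\<in>{n+1..2*n}. a i - a n) > 0" "(\<Prod>i\<in>{1..n}. a (n+1) - a i) > 0"
    using a_less_iff n_ge_1 by (auto intro!: prod_pos)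
  then show "interval_fun n a c (a n) < 0" "interval_fun n a c (a (n+1)) > 0"
    unfolding interval_fun_def zero using assms by simp_all
qed

lemma interval_fun_unique_root:
  assumes "c > 0"
  obtains x0 where "a n < x0" "x0 < a (n+1)" "interval_fun n a c x0 = 0"
    and "\<And>x. a n \<le> x \<Longrightarrow> x \<le> a (n+1) \<Longrightarrow> interval_fun n a c x = 0 \<Longrightarrow> x = x0"
proof -
  have "a n \<le> a (n+1)"
    using a_le_iff n_ge_1 by simp
  moreover have "continuous_on {a n..a (n+1)} (interval_fun n a c)"
    unfolding interval_fun_def by (intro continuous_intros)
  ultimately obtain x0 where x0: "a n \<le> x0" "x0 \<le> a (n+1)" "interval_fun n a c x0 = 0"
    using IVT'[of "interval_fun n a c" "a n" 0 "a (n+1)"] interval_fun_endpoints[OF assms] by force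
  moreover have "x0 \<noteq> a n" "x0 \<noteq> a (n+1)"
    using x0(3) interval_fun_endpoints[OF assms] by auto
  ultimately have "a n < x0" "x0 < a (n+1)"
    by linarith+
  moreover have "x = x0" if "a n \<le> x" "x \<le> a (n+1)" "interval_fun n a c x = 0" for x
    using interval_fun_strict_mono[OF assms, of x x0] interval_fun_strict_mono[OF assms, of x0 x] that x0
    by (cases x x0 rule: linorder_cases) auto
  ultimately show ?thesis
    using x0(3) that by blast
qed

lemma order_interval_poly_root:
  assumes "c > 0" and "a n < x" "x < a (n+1)" and "interval_fun n a c x = 0"
  shows "order (complex_of_real x) (interval_poly n a c) = 1"
proof -
  define A where "A = (\<Sum>j\<in>{1..n}. \<Prod>i\<in>{1..n} - {j}. x - a i)"
  define B where "B = (\<Sum>j\<in>{n+1..2*n}. \<Prod>i\<in>{n+1..2*n} - {j}. a i - x)"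
  have "A > 0"
    unfolding A_def
  proof (intro sum_pos prod_pos)
    fix i j assume "i \<in> {1..n} - {j}"
    then show "0 < x - a i"
      using assms lower_le_a_n[of i] by auto
  qed (use n_ge_1 in auto)
  moreover have "B > 0"
    unfolding B_def
  proof (intro sum_pos prod_pos)
    fix i j assume "i \<in> {n+1..2*n} - {j}"
    then show "0 < a i - x"
      using assms upper_ge_a_Suc_n[of i] by auto
  qed (use n_ge_1 in auto)
  ultimately have "c * A + B \<noteq> 0"
    using assms(1) by (smt (verit) mult_pos_pos)
  moreover have "poly (pderiv (interval_poly n a c)) (complex_of_real x) = complex_of_real (c * A + B)"
    by (simp add: interval_poly_def g_poly_def pderiv_diff pderiv_smult poly_pderiv_root_poly
        poly_pderiv_h_poly A_def B_def)
  ultimately have d: "poly (pderiv (interval_poly n a c)) (complex_of_real x) \<noteq> 0"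
    by (simp only: of_real_eq_0_iff not_False_eq_True)
  then have "interval_poly n a c \<noteq> 0"
    by auto
  moreover have "poly (interval_poly n a c) (complex_of_real x) = 0"
    using assms(4) by (simp add: poly_interval_poly)
  ultimately show ?thesis
    using d by (simp add: order_pderiv order_0I)
qed

lemma interior_nonzero:
  assumes "a n < x" "x < a (n+1)"
  shows "hf n a (complex_of_real x) \<noteq> 0" and "poly (g_poly n a) (complex_of_real x) \<noteq> 0"
proof -
  have "x \<noteq> a i" if "i \<in> {1..2*n}" for i
    using that assms lower_le_a_n[of i] upper_ge_a_Suc_n[of i] by (cases "i \<le> n") auto
  then show "hf n a (complex_of_real x) \<noteq> 0" "poly (g_poly n a) (complex_of_real x) \<noteq> 0"
    by (auto simp: hf_def g_poly_def)
qed

lemma central_circle_cases: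
  assumes "q \<in> central_circle n a"
  obtains (lower) "q = ram_pt a n" | (upper) "q = ram_pt a (n+1)"
    | (interior) v x where "q = Aff v (complex_of_real x)" "a n < x" "x < a (n+1)"
        "v\<^sup>2 = hf n a (complex_of_real x)"
proof -
  obtain v z where q: "q = Aff v z" "z \<in> \<real>" "a n \<le> Re z" "Re z \<le> a (n+1)" "v\<^sup>2 = hf n a z"
    using assms unfolding central_circle_def Sigma_pts_def by blast
  define x where "x = Re z"
  have z: "z = complex_of_real x"
    using q(2) by (simp add: x_def Reals_def)
  have branch_value: "hf n a (complex_of_real (a i)) = 0" if "i \<in> {n, n+1}" for i
    unfolding hf_eq_0_iff using that n_ge_1 by (intro bexI[of _ i]) auto
  consider "x = a n" | "x = a (n+1)" | "a n < x \<and> x < a (n+1)"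
    using q x_def by fastforce
  then show ?thesis
  proof cases
    case 1
    then have "v = 0"
      using q(5) branch_value[of n] by (simp add: z)
    then show ?thesis
      using lower q(1) 1 by (simp add: ram_pt_def z)
  next
    case 2
    then have "v = 0"
      using q(5) branch_value[of "n+1"] by (simp add: z)
    then show ?thesis
      using upper q(1) 2 by (simp add: ram_pt_def z)
  qed (use interior q z in blast)
qed

lemma ram_pt_in_central_circle:
  shows "ram_pt a n \<in> central_circle n a" and "ram_pt a (n+1) \<in> central_circle n a"
proof -
  have "hf n a (complex_of_real (a i)) = 0" if "i \<in> {1..2*n}" for i
    using that unfolding hf_eq_0_iff by blast
  then have "hf n a (complex_of_real (a n)) = 0" "hf n a (complex_of_real (a (n+1))) = 0"
    using n_ge_1 by simp_all
  moreover have "a n \<le> a (n+1)"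
    using a_le_iff n_ge_1 by simp
  ultimately show "ram_pt a n \<in> central_circle n a" "ram_pt a (n+1) \<in> central_circle n a"
    by (auto simp: central_circle_def ram_pt_def Sigma_pts_def)
qed

lemma g_h_no_common_root: "poly (g_poly n a) z = 0 \<Longrightarrow> poly (h_poly n a) z \<noteq> 0"
  using branch_eq_iff by (fastforce simp: g_poly_def poly_h_poly)

lemma pencil_norm_poly_nonzero:
  assumes "l \<noteq> 0 \<or> m \<noteq> 0"
  shows "pencil_norm_poly n a l m \<noteq> 0"
proof
  assume N: "pencil_norm_poly n a l m = 0"
  have "poly (g_poly n a) (complex_of_real (a 1)) = 0" "poly (g_poly n a) (complex_of_real (a (n+1))) \<noteq> 0"
    using poly_g_poly_eq_0_iff[of 1] poly_g_poly_eq_0_iff[of "n+1"] n_ge_1 by auto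
  moreover have "poly (h_poly n a) (complex_of_real (a (n+1))) = 0"
    using n_ge_1 by (auto simp: poly_h_poly)
  ultimately show False
    using assms g_h_no_common_root
      arg_cong[OF N, of "\<lambda>P. poly P (complex_of_real (a 1))"]
      arg_cong[OF N, of "\<lambda>P. poly P (complex_of_real (a (n+1)))"]
    by (auto simp: pencil_norm_poly_def)
qed

lemma pencil_div_regular_nonzero_iff:
  assumes "l \<noteq> 0 \<or> m \<noteq> 0" and "v \<noteq> 0" "v\<^sup>2 = hf n a z" and "poly (g_poly n a) z \<noteq> 0"
  shows "pencil_div n a l m (Aff v z) \<noteq> 0 \<longleftrightarrow> l + m * v / poly (g_poly n a) z = 0"
  using zorder_pencil_fun_regular_eq_0_iff[OF assms] assms(2) by (simp add: pencil_div_def D_L_Aff)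

lemma pencil_div_lower_branch:
  "m \<noteq> 0 \<Longrightarrow> pencil_div n a l m (ram_pt a n) = 0"
  using D_L_ram_pt[of n] zorder_pencil_fun_branch_lower[of n] n_ge_1 by (simp add: pencil_div_def)

lemma pencil_div_upper_branch:
  "l \<noteq> 0 \<or> m \<noteq> 0 \<Longrightarrow> pencil_div n a l m (ram_pt a (n+1)) = (if l = 0 then 1 else 0)"
  using D_L_ram_pt[of "n+1"] zorder_pencil_fun_branch_upper[of "n+1"] n_ge_1
  by (simp add: pencil_div_def)

lemma pencil_div_constant:
  assumes "l \<noteq> 0"
  shows "pencil_div n a l 0 p = D_L n a p"
proof -
  have "pencil_fun n a l 0 p = (\<lambda>_. l)"
    by (simp add: pencil_fun_def fun_eq_iff)
  then show ?thesis
    using assms by (simp add: pencil_div_def)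
qed

lemma pencil_div_over_norm_root:
  assumes "l \<noteq> 0" "m \<noteq> 0" and root: "poly (pencil_norm_poly n a l m) z0 = 0"
    and g0: "poly (g_poly n a) z0 \<noteq> 0"
  defines "v0 \<equiv> - (l / m) * poly (g_poly n a) z0"
  shows "Aff v0 z0 \<in> Sigma_pts n a"
    and "pencil_div n a l m (Aff v0 z0) = int (order z0 (pencil_norm_poly n a l m))"
proof -
  have v0: "v0\<^sup>2 = hf n a z0"
    using pencil_norm_poly_root_on_curve[OF assms(2) root] by (simp add: v0_def)
  then show "Aff v0 z0 \<in> Sigma_pts n a"
    by (simp add: Sigma_pts_def)
  have "v0 \<noteq> 0"
    using assms(1,2) g0 by (simp add: v0_def)
  moreover have "l + m * v0 / poly (g_poly n a) z0 = 0"
    using assms(2) g0 by (simp add: v0_def)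
  ultimately show "pencil_div n a l m (Aff v0 z0) = int (order z0 (pencil_norm_poly n a l m))"
    using zorder_pencil_fun_regular_zero[OF _ v0 g0 assms(1)] pencil_norm_poly_nonzero[of l m] assms(1)
    by (simp add: pencil_div_def D_L_Aff)
qed

lemma unique_circle_point_m_eq_0:
  assumes "l \<noteq> 0"
  shows "\<exists>q\<in>central_circle n a. pencil_div n a l 0 q = 1 \<and>
           (\<forall>q'\<in>central_circle n a. pencil_div n a l 0 q' \<noteq> 0 \<longrightarrow> q' = q)"
proof (intro bexI conjI ballI impI)
  show "pencil_div n a l 0 (ram_pt a n) = 1"
    using D_L_ram_pt[of n] n_ge_1 assms by (simp add: pencil_div_constant)
  fix q' assume "q' \<in> central_circle n a" "pencil_div n a l 0 q' \<noteq> 0"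
  then show "q' = ram_pt a n"
  proof (cases rule: central_circle_cases)
    case upper
    then show ?thesis
      using \<open>pencil_div n a l 0 q' \<noteq> 0\<close> D_L_ram_pt[of "n+1"] n_ge_1 assms
      by (simp add: pencil_div_constant)
  next
    case (interior v x)
    then have "v \<noteq> 0"
      using interior_nonzero(1) by auto
    then show ?thesis
      using interior \<open>pencil_div n a l 0 q' \<noteq> 0\<close> assms by (simp add: pencil_div_constant D_L_Aff)
  qed
qed (rule ram_pt_in_central_circle(1))

lemma unique_circle_point_l_eq_0:
  assumes "m \<noteq> 0"
  shows "\<exists>q\<in>central_circle n a. pencil_div n a 0 m q = 1 \<and>
           (\<forall>q'\<in>central_circle n a. pencil_div n a 0 m q' \<noteq> 0 \<longrightarrow> q' = q)"
proof (intro bexI conjI ballI impI)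
  show "pencil_div n a 0 m (ram_pt a (n+1)) = 1"
    using pencil_div_upper_branch[of 0 m] assms by simp
  fix q' assume "q' \<in> central_circle n a" "pencil_div n a 0 m q' \<noteq> 0"
  then show "q' = ram_pt a (n+1)"
  proof (cases rule: central_circle_cases)
    case (interior v x)
    then have g: "poly (g_poly n a) (complex_of_real x) \<noteq> 0" and "v \<noteq> 0"
      using interior_nonzero by auto
    then show ?thesis
      using interior assms \<open>pencil_div n a 0 m q' \<noteq> 0\<close>
        pencil_div_regular_nonzero_iff[of 0 m v, OF _ _ _ g]
      by auto
  qed (use assms pencil_div_lower_branch in auto)
qed (rule ram_pt_in_central_circle(2))

lemma unique_circle_point_real_ratio:
  assumes "l \<noteq> 0" "m \<noteq> 0" and real: "cnj (l / m) = (-1) ^ n * (l / m)"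
  shows "\<exists>q\<in>central_circle n a. pencil_div n a l m q = 1 \<and>
           (\<forall>q'\<in>central_circle n a. pencil_div n a l m q' \<noteq> 0 \<longrightarrow> q' = q)"
proof -
  define c where "c = (cmod (l / m))\<^sup>2"
  have "c > 0"
    using assms by (simp add: c_def)
  have N: "pencil_norm_poly n a l m = smult ((-1) ^ n * m\<^sup>2) (interval_poly n a c)"
    unfolding c_def by (rule pencil_norm_poly_real_ratio[OF assms(2) real])
  then have N_root: "poly (pencil_norm_poly n a l m) z = 0 \<longleftrightarrow> poly (interval_poly n a c) z = 0" for z
    using assms(2) by simp
  obtain x0 where x0: "a n < x0" "x0 < a (n+1)" "interval_fun n a c x0 = 0"
    and uniq: "\<And>x. a n \<le> x \<Longrightarrow> x \<le> a (n+1) \<Longrightarrow> interval_fun n a c x = 0 \<Longrightarrow> x = x0"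
    using interval_fun_unique_root[OF \<open>c > 0\<close>] by blast
  define z0 v0 where "z0 = complex_of_real x0" and "v0 = - (l / m) * poly (g_poly n a) z0"
  have g0: "poly (g_poly n a) z0 \<noteq> 0"
    using interior_nonzero x0 by (auto simp: z0_def)
  have root: "poly (pencil_norm_poly n a l m) z0 = 0"
    using N_root x0(3) by (simp add: z0_def poly_interval_poly)
  have "order z0 (pencil_norm_poly n a l m) = 1"
    unfolding N z0_def using order_interval_poly_root[OF \<open>c > 0\<close> x0] assms(2)
    by (subst order_smult) simp_all
  then have "pencil_div n a l m (Aff v0 z0) = 1"
    using pencil_div_over_norm_root(2)[OF assms(1,2) root g0] by (simp add: v0_def)
  moreover have "Aff v0 z0 \<in> central_circle n a"
    using pencil_div_over_norm_root(1)[OF assms(1,2) root g0] x0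
    by (auto simp: central_circle_def z0_def v0_def)
  moreover have "q' = Aff v0 z0" if "q' \<in> central_circle n a" "pencil_div n a l m q' \<noteq> 0" for q'
    using that(1)
  proof (cases rule: central_circle_cases)
    case (interior v x)
    then have g: "poly (g_poly n a) (complex_of_real x) \<noteq> 0" and "v \<noteq> 0"
      using interior_nonzero by auto
    then have zero: "l + m * v / poly (g_poly n a) (complex_of_real x) = 0"
      using pencil_div_regular_nonzero_iff[OF _ \<open>v \<noteq> 0\<close> interior(4) g] that(2) interior(1) assms(1)
      by auto
    then have "poly (interval_poly n a c) (complex_of_real x) = 0"
      using pencil_fun_zero_imp_norm_root[OF interior(4) g zero] N_root by simp
    then have "x = x0"
      using uniq interior by (simp add: poly_interval_poly)
    moreover have "v = - (l / m) * poly (g_poly n a) (complex_of_real x)"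
      using zero g assms(2) by (simp add: field_simps add_eq_0_iff)
    ultimately show ?thesis
      using interior(1) by (simp add: v0_def z0_def)
  qed (use that(2) assms pencil_div_lower_branch[of m l] pencil_div_upper_branch[of l m] in simp_all)
  ultimately show ?thesis
    by blast
qed

subsection \<open>Real members\<close>

lemma poly_h_poly_a1_ne_a2:
  assumes "n \<ge> 2"
  shows "poly (h_poly n a) (complex_of_real (a 1)) \<noteq> poly (h_poly n a) (complex_of_real (a 2))"
proof -
  have "(\<Prod>i\<in>{n+1..2*n}. a i - a 2) < (\<Prod>i\<in>{n+1..2*n}. a i - a 1)"
  proof (rule prod_mono_strict[of "n+1"])
    fix i assume "i \<in> {n+1..2*n}"
    then have "a 2 < a i" "a 1 < a 2"
      using a_less_iff[of 2 i] a_less_iff[of 1 2] assms by auto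
    then show "0 \<le> a i - a 2 \<and> a i - a 2 \<le> a i - a 1" "0 < a i - a 1"
      by auto
  qed (use assms a_less_iff[of 1 2] in auto)
  moreover have h: "poly (h_poly n a) (complex_of_real x) = complex_of_real (\<Prod>i\<in>{n+1..2*n}. a i - x)" for x
    by (simp add: poly_h_poly)
  ultimately show ?thesis
    unfolding h of_real_eq_iff by linarith
qed

lemma pencil_norm_poly_root_off_g:
  assumes "n \<ge> 2" "m \<noteq> 0"
  obtains z0 where "poly (pencil_norm_poly n a l m) z0 = 0" "poly (g_poly n a) z0 \<noteq> 0"
proof -
  define N where "N = pencil_norm_poly n a l m"
  have "poly (g_poly n a) (complex_of_real (a 1)) = 0" "poly (g_poly n a) (complex_of_real (a 2)) = 0"
    using poly_g_poly_eq_0_iff[of 1] poly_g_poly_eq_0_iff[of 2] assms(1) by auto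
  then have "poly N (complex_of_real (a 1)) \<noteq> poly N (complex_of_real (a 2))"
    using poly_h_poly_a1_ne_a2[OF assms(1)] assms(2) by (simp add: N_def pencil_norm_poly_def)
  then have "\<not> constant (poly N)"
    unfolding constant_def by blast
  then obtain z0 where z0: "poly N z0 = 0"
    using fundamental_theorem_of_algebra by blast
  moreover have "poly (g_poly n a) z0 \<noteq> 0"
  proof
    assume g: "poly (g_poly n a) z0 = 0"
    then have "(-1) ^ n * m\<^sup>2 * poly (h_poly n a) z0 = 0"
      using z0 by (simp add: N_def pencil_norm_poly_def)
    then show False
      using g_h_no_common_root[OF g] assms(2) by simp
  qed
  ultimately show ?thesis
    using that by (simp add: N_def)
qed

lemma pencil_ratio_real:
  assumes "n \<ge> 2" "m \<noteq> 0"
    and inv: "\<And>p. p \<in> Sigma_pts n a \<Longrightarrow> pencil_div n a l m (sigma_pt n p) = pencil_div n a l m p"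
  shows "cnj (l / m) = (-1) ^ n * (l / m)"
proof (cases "l = 0")
  case False
  obtain z0 where root: "poly (pencil_norm_poly n a l m) z0 = 0" and g0: "poly (g_poly n a) z0 \<noteq> 0"
    using pencil_norm_poly_root_off_g[OF assms(1,2)] by blast
  define k v0 where "k = l / m" and "v0 = - k * poly (g_poly n a) z0"
  have p: "Aff v0 z0 \<in> Sigma_pts n a"
    using pencil_div_over_norm_root(1)[OF False assms(2) root g0] by (simp add: v0_def k_def)
  have "pencil_div n a l m (Aff v0 z0) \<noteq> 0"
    using pencil_div_over_norm_root(2)[OF False assms(2) root g0] root pencil_norm_poly_nonzero[of l m] False
    by (simp add: v0_def k_def order_root)
  define v1 where "v1 = (-1) ^ n * cnj v0"
  \<comment> \<open>\<sigma> maps the zero \<open>Aff v0 z0\<close> of the pencil function to another zero; comparing the two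
    values of \<open>v / g\<close> gives the reality condition.\<close>
  have "Aff v1 (cnj z0) \<in> Sigma_pts n a" and "pencil_div n a l m (Aff v1 (cnj z0)) \<noteq> 0"
    using sigma_pt_in_Sigma_pts[OF p] inv[OF p] \<open>pencil_div n a l m (Aff v0 z0) \<noteq> 0\<close>
    by (simp_all add: v1_def)
  moreover have "v1 \<noteq> 0" and g1: "poly (g_poly n a) (cnj z0) \<noteq> 0"
    using False assms(2) g0 by (simp_all add: v1_def v0_def k_def flip: cnj_poly_g_poly)
  ultimately have "l + m * v1 / poly (g_poly n a) (cnj z0) = 0"
    using pencil_div_regular_nonzero_iff[OF _ \<open>v1 \<noteq> 0\<close> _ g1] assms(2) by (simp add: Sigma_pts_def)
  then have "l + m * (v1 / poly (g_poly n a) (cnj z0)) = 0"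
    by simp
  moreover have "v1 / poly (g_poly n a) (cnj z0) = - ((-1) ^ n * cnj k)"
    using g1 by (simp add: v1_def v0_def cnj_poly_g_poly)
  moreover have "l = k * m"
    using assms(2) by (simp add: k_def)
  ultimately have "m * (k - (-1) ^ n * cnj k) = 0"
    by (simp add: algebra_simps)
  then have "k = (-1) ^ n * cnj k"
    using assms(2) by simp
  from arg_cong[OF this, of cnj] show ?thesis
    by (simp add: k_def)
qed simp

lemma pencil_div_unique_circle_point:
  assumes "l \<noteq> 0 \<or> m \<noteq> 0" and "m \<noteq> 0 \<Longrightarrow> cnj (l / m) = (-1) ^ n * (l / m)"
  shows "\<exists>q\<in>central_circle n a. pencil_div n a l m q = 1 \<and>
           (\<forall>q'\<in>central_circle n a. pencil_div n a l m q' \<noteq> 0 \<longrightarrow> q' = q)"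
proof (cases "m = 0")
  case True
  then show ?thesis
    using assms(1) unique_circle_point_m_eq_0[of l] by simp
next
  case m: False
  show ?thesis
  proof (cases "l = 0")
    case True
    then show ?thesis
      using unique_circle_point_l_eq_0[OF m] by simp
  next
    case False
    then show ?thesis
      using unique_circle_point_real_ratio[OF False m assms(2)[OF m]] by simp
  qed
qed

end

theorem proposition6p1:
  fixes n :: nat and a :: "nat \<Rightarrow> real" and D :: "spt \<Rightarrow> int"
  assumes "n \<ge> 2"
    and "strict_mono_on {1..2*n} a"
    and "D \<in> real_members n a"
  shows "\<exists>q \<in> central_circle n a. D q = 1 \<and>
           (\<forall>q' \<in> central_circle n a. D q' \<noteq> 0 \<longrightarrow> q' = q)"
proof -
  interpret real_branch_points n a
    using assms(1,2) by unfold_locales auto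
  have D: "D \<in> pencil_members n a" and D_sigma: "\<And>p. D (sigma_pt n p) = D p"
    using assms(3) by (auto simp: real_members_def)
  obtain l m where lm: "l \<noteq> 0 \<or> m \<noteq> 0"
    and D_eq: "\<And>p. p \<in> Sigma_pts n a \<Longrightarrow> D p = pencil_div n a l m p"
    using pencil_member_eq_pencil_div[OF D] by blast
  have inv: "pencil_div n a l m (sigma_pt n p) = pencil_div n a l m p" if "p \<in> Sigma_pts n a" for p
    using D_sigma[of p] D_eq[OF that] D_eq[OF sigma_pt_in_Sigma_pts[OF that]] by simp
  have "cnj (l / m) = (-1) ^ n * (l / m)" if "m \<noteq> 0"
    by (rule pencil_ratio_real[OF assms(1) that inv])
  then obtain q where q: "q \<in> central_circle n a" "pencil_div n a l m q = 1"
    and unique: "\<And>q'. q' \<in> central_circle n a \<Longrightarrow> pencil_div n a l m q' \<noteq> 0 \<Longrightarrow> q' = q"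
    using pencil_div_unique_circle_point[OF lm] by blast
  have D_circle: "D q' = pencil_div n a l m q'" if "q' \<in> central_circle n a" for q'
    using that D_eq by (simp add: central_circle_def)
  show ?thesis
  proof (intro bexI conjI ballI impI)
    show "D q = 1"
      using q D_circle by simp
    show "q' = q" if "q' \<in> central_circle n a" "D q' \<noteq> 0" for q'
      using that unique D_circle by simp
  qed (rule q(1))
qed

end
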